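(* Let $k,m$ be positive integers, $n=km$, $f:\mathbb{N}\to\mathbb{N}$ monotonically decreasing (nonincreasing), and $T_1,\dots,T_n\in\{H,L\}$ with $0\le H<L$. Let $\mathbf{x}$ be the decision sequence output by Algorithm 1 on input capacities $m_1=\dots=m_k=m$ and task sequence $T_1,\dots,T_n$. Then $\mathbf{x}$ assigns exactly $m$ tasks to each agent, and its total cost $\sum_{t=1}^n f(p_t)\,T_t$ is minimum among all size-$m$ $k$-allocation schemes of the $n$ tasks (equivalently, among all decision sequences assigning exactly $m$ tasks to each agent).
   Context: Positional allocation problem: given $n=km$ tasks with intrinsic costs $T_1,\dots,T_n$ and $k$ agents, a decision sequence $\mathbf{x}=(x_1,\dots,x_n)\in[k]^n$ assigns task $t$ to agent $x_t$, with each agent receiving exactly $m$ tasks; tasks assigned to the same agent are processed in increasing index order, and the position of task $t$ is $p_t=|\{s\le t: x_s=x_t\}|$. Its total cost is $\sum_{t=1}^n f(p_t)T_t$ (equivalently, $\sum_{r=1}^k\sum_{p=1}^m f(p)\,T_{r,p}$ where $T_{r,p}$ is the cost of the $p$-th task of agent $r$). Algorithm 1 (simulation-based threshold algorithm). Input: integers $0\le m_1\le\dots\le m_k$ and a sequence $T_1,\dots,T_n$ with $n=\sum_r m_r$. Set $q^{(1)}_r=m_r$ for all $r$. For $t=1,\dots,n$: set $x_t=\mathrm{TA}(q^{(t)}_1,\dots,q^{(t)}_k;\,T_t,T_{t+1},\dots,T_n)$ and $q^{(t+1)}_r=q^{(t)}_r-\mathbf{1}(x_t=r)$ for each $r$.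 Output $\mathbf{x}=(x_1,\dots,x_n)$. Subroutine $\mathrm{TA}(m_1,\dots,m_k;\,S_1,\dots,S_N)$ (ThresholdAllocation), with the convention $m_0:=0$: for $\gamma=k,k-1,\dots,1$: if $m_\gamma=m_{\gamma-1}$, go to the next $\gamma$; otherwise, for $h=\gamma,\gamma+1,\dots,k$: let $Z_L=\sum_{i=1}^{h-1}\min\{m_i,m_{\gamma-1}\}$ and $Z_H=\sum_{i=\gamma}^{h}(m_i-m_{\gamma-1})$; if $|\{i\in\{1,\dots,Z_L+Z_H\}: S_i>S_1\}|\ge Z_L$, return $\gamma$ (agent to which $S_1$ is assigned). *)

theory Defs
  imports Complex_Main
begin

text \<open>Agents are indexed 1..k, tasks 1..n. Capacities are functions nat => nat
  (only indices 1..k matter); the convention m_0 := 0 is implemented by cap0.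
  Task sequences S, T are functions nat => real indexed from 1.\<close>

definition cap0 :: "(nat \<Rightarrow> nat) \<Rightarrow> nat \<Rightarrow> nat" where
  "cap0 ms i = (if i = 0 then 0 else ms i)"

text \<open>The test of the inner loop of ThresholdAllocation for given gamma and h.\<close>
definition ta_test :: "(nat \<Rightarrow> nat) \<Rightarrow> (nat \<Rightarrow> real) \<Rightarrow> nat \<Rightarrow> nat \<Rightarrow> bool" where
  "ta_test ms S \<gamma> h =
     (let ZL = (\<Sum>i = 1..h - 1. min (cap0 ms i) (cap0 ms (\<gamma> - 1)));
          ZH = (\<Sum>i = \<gamma>..h. cap0 ms i - cap0 ms (\<gamma> - 1))
      in card {i \<in> {1..ZL + ZH}. S i > S 1} \<ge> ZL)"

text \<open>Outer loop over gamma = g, g-1, ..., 1 (returns 0 if the loop finishes without returning).\<close>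
fun ta_loop :: "nat \<Rightarrow> (nat \<Rightarrow> nat) \<Rightarrow> (nat \<Rightarrow> real) \<Rightarrow> nat \<Rightarrow> nat" where
  "ta_loop k ms S 0 = 0"
| "ta_loop k ms S (Suc g) =
     (if cap0 ms (Suc g) \<noteq> cap0 ms g \<and> (\<exists>h \<in> {Suc g..k}. ta_test ms S (Suc g) h)
      then Suc g else ta_loop k ms S g)"

definition TA :: "nat \<Rightarrow> (nat \<Rightarrow> nat) \<Rightarrow> (nat \<Rightarrow> real) \<Rightarrow> nat" where
  "TA k ms S = ta_loop k ms S k"

text \<open>alg_cap k ms T j = q^(j+1) (capacities before step j+1) of Algorithm 1.\<close>
fun alg_cap :: "nat \<Rightarrow> (nat \<Rightarrow> nat) \<Rightarrow> (nat \<Rightarrow> real) \<Rightarrow> nat \<Rightarrow> (nat \<Rightarrow> nat)" where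
  "alg_cap k ms T 0 = ms"
| "alg_cap k ms T (Suc j) =
     (\<lambda>r. alg_cap k ms T j r -
          (if TA k (alg_cap k ms T j) (\<lambda>i. T (j + i)) = r then 1 else 0))"

definition alg1 :: "nat \<Rightarrow> (nat \<Rightarrow> nat) \<Rightarrow> (nat \<Rightarrow> real) \<Rightarrow> nat \<Rightarrow> nat" where
  "alg1 k ms T t = TA k (alg_cap k ms T (t - 1)) (\<lambda>i. T (t - 1 + i))"

definition pos :: "(nat \<Rightarrow> nat) \<Rightarrow> nat \<Rightarrow> nat" where
  "pos x t = card {s \<in> {1..t}. x s = x t}"

definition total_cost :: "(nat \<Rightarrow> nat) \<Rightarrow> (nat \<Rightarrow> real) \<Rightarrow> nat \<Rightarrow> (nat \<Rightarrow> nat) \<Rightarrow> real" where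
  "total_cost f T n x = (\<Sum>t = 1..n. real (f (pos x t)) * T t)"

definition is_alloc :: "nat \<Rightarrow> nat \<Rightarrow> nat \<Rightarrow> (nat \<Rightarrow> nat) \<Rightarrow> bool" where
  "is_alloc k m n x = ((\<forall>t \<in> {1..n}. x t \<in> {1..k}) \<and>
                       (\<forall>r \<in> {1..k}. card {t \<in> {1..n}. x t = r} = m))"

end

theory Submission
  imports Defs
begin

text \<open>
  Since the costs take only the values H < L and f is nonincreasing, the
  total cost of an allocation is determined (by summation by parts over positions) by
  the numbers \<open>k * c\<close> of tasks in positions \<open>\<le> c\<close> and by the numbers of L tasks in
  positions \<open>\<le> c\<close>, for \<open>c < m\<close>. So it suffices to show that Algorithm 1 puts, for
  every \<open>c\<close>, the fewest L tasks into the early positions \<open>\<le> c\<close>.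

  Fix a threshold \<open>u = m - c\<close>. When an agent has \<open>q\<close> free slots left, its next \<open>q - u\<close>
  slots are "high" (early) and the last \<open>min q u\<close> are "low". A low slot of an agent
  becomes usable only after all its high slots are filled. From this we define, for
  remaining capacities \<open>q\<close> and remaining task types, a potential: the maximum over
  prefixes of the number of forced high placements minus the number of H tasks
  available to fill them. We prove
  \<^item> every allocation places at least \<open>potential\<close> L tasks into high slots
    (\<open>high_L_count_lower\<close>), because one step lowers the potential by at most the
    number of L tasks it puts in a high slot;
  \<^item> Algorithm 1 places at most \<open>potential\<close> L tasks into high slots
    (\<open>high_L_count_alg_upper\<close>), by a case analysis of the threshold tests of
    ThresholdAllocation (the lemmas in the context around \<open>potential_step_upper\<close>).
\<close>

lemma sum_upd_eq:
  fixes g :: "nat \<Rightarrow> nat"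
  assumes "finite X"
  shows "(\<Sum>i\<in>X. g ((q(r:=v)) i)) + (if r\<in>X then g (q r) else 0) = (\<Sum>i\<in>X. g (q i)) + (if r \<in> X then g v else 0)"
proof (cases "r \<in> X")
  case True
  have e1: "(\<Sum>i\<in>X. g ((q(r:=v)) i)) = g v + (\<Sum>i\<in>X-{r}. g ((q(r:=v)) i))"
    using sum.remove[OF assms True, of "\<lambda>i. g ((q(r:=v)) i)"] by simp
  have e2: "(\<Sum>i\<in>X-{r}. g ((q(r:=v)) i)) = (\<Sum>i\<in>X-{r}. g (q i))" by (rule sum.cong) auto
  have e3: "(\<Sum>i\<in>X. g (q i)) = g (q r) + (\<Sum>i\<in>X-{r}. g (q i))"
    using sum.remove[OF assms True, of "\<lambda>i. g (q i)"] by simp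
  show ?thesis using True e1 e2 e3 by simp
next
  case False
  have "(\<Sum>i\<in>X. g ((q(r:=v)) i)) = (\<Sum>i\<in>X. g (q i))" by (rule sum.cong) (use False in auto)
  then show ?thesis using False by simp
qed

lemma sum_notin_upd: "r \<notin> X \<Longrightarrow> (\<Sum>i\<in>X. g ((q(r:=v)) i)) = (\<Sum>i\<in>X. g (q i))"
  by (rule sum.cong) auto

lemma finite_agent_set: "X \<subseteq> {1..(k::nat)} \<Longrightarrow> finite X"
  by (rule finite_subset) auto

lemma sum_pos_witness: "finite A \<Longrightarrow> (0::nat) < (\<Sum>i\<in>A. f i) \<Longrightarrow> \<exists>i\<in>A. 0 < f i"
  by (metis not_gr0 sum.neutral)

lemma sum_split_at:
  assumes "1 \<le> g" "g \<le> Suc (h::nat)"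
  shows "(\<Sum>i=1..h. f i) = (\<Sum>i=1..g-1. f i) + (\<Sum>i=g..h. (f i :: nat))"
proof -
  have e: "{1..h} = {1..g-1} \<union> {g..h}" using assms by auto
  have d: "{1..g-1} \<inter> {g..h} = {}" by auto
  show ?thesis unfolding e by (rule sum.union_disjoint) (use d in auto)
qed

lemma sum_split_last: assumes "1 \<le> (h::nat)" shows "(\<Sum>i=1..h. f i) = (\<Sum>i=1..h-1. f i) + (f h :: nat)"
proof -
  obtain h' where h: "h = Suc h'" using assms by (cases h) auto
  show ?thesis unfolding h by (simp add: sum.cl_ivl_Suc)
qed

text \<open>Capacities sorted nondecreasingly over the agents \<open>1..k\<close>; Algorithm 1 keeps this
  invariant, and ThresholdAllocation relies on it.\<close>
definition sorted_on :: "nat \<Rightarrow> (nat \<Rightarrow> nat) \<Rightarrow> bool" where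
  "sorted_on k q = (\<forall>i j. 1 \<le> i \<longrightarrow> i \<le> j \<longrightarrow> j \<le> k \<longrightarrow> q i \<le> q j)"

lemma sorted_onD: "sorted_on k q \<Longrightarrow> 1 \<le> i \<Longrightarrow> i \<le> j \<Longrightarrow> j \<le> k \<Longrightarrow> q i \<le> q j"
  unfolding sorted_on_def by blast

section \<open>Usable low slots\<close>

text \<open>\<open>low_room k u q a\<close>: the largest number of low slots (at threshold \<open>u\<close>) that can be
  unlocked by filling at most \<open>a\<close> high slots, i.e. the maximum of
  \<open>\<Sum>i\<in>X. min (q i) u\<close> over sets \<open>X\<close> of agents whose high slots total at most \<open>a\<close>.\<close>
definition low_room :: "nat \<Rightarrow> nat \<Rightarrow> (nat \<Rightarrow> nat) \<Rightarrow> nat \<Rightarrow> nat" where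
 "low_room k u q a = Max ((\<lambda>X. \<Sum>i\<in>X. min (q i) u) ` {X. X \<subseteq> {1..k} \<and> (\<Sum>i\<in>X. q i - u) \<le> a})"

lemma low_room_finite_choices: "finite {X. X \<subseteq> {1..(k::nat)} \<and> (\<Sum>i\<in>X. q i - u) \<le> (a::nat)}"
  by (rule finite_subset[of _ "Pow {1..k}"]) auto

lemma low_room_ge: "X \<subseteq> {1..k} \<Longrightarrow> (\<Sum>i\<in>X. q i - u) \<le> a \<Longrightarrow> (\<Sum>i\<in>X. min (q i) u) \<le> low_room k u q a"
  unfolding low_room_def by (rule Max_ge) (use low_room_finite_choices in auto)

lemma low_room_attained: "\<exists>X. X \<subseteq> {1..k} \<and> (\<Sum>i\<in>X. q i - u) \<le> a \<and> low_room k u q a = (\<Sum>i\<in>X. min (q i) u)"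
proof -
  let ?S = "{X. X \<subseteq> {1..k} \<and> (\<Sum>i\<in>X. q i - u) \<le> a}"
  have ne: "{} \<in> ?S" by simp
  have "low_room k u q a \<in> (\<lambda>X. \<Sum>i\<in>X. min (q i) u) ` ?S"
    unfolding low_room_def by (rule Max_in[OF finite_imageI[OF low_room_finite_choices]]) (use ne in blast)
  then obtain X where "X \<in> ?S" "low_room k u q a = (\<Sum>i\<in>X. min (q i) u)" by (rule imageE)
  then show ?thesis by blast
qed

lemma low_room_transfer:
  assumes "\<And>X. X \<subseteq> {1..k} \<Longrightarrow> (\<Sum>i\<in>X. q i - u) \<le> a \<Longrightarrow>
     \<exists>X'. X' \<subseteq> {1..k} \<and> (\<Sum>i\<in>X'. q' i - u') \<le> b \<and> (\<Sum>i\<in>X. min (q i) u) + d \<le> (\<Sum>i\<in>X'. min (q' i) u') + e"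
  shows "low_room k u q a + d \<le> low_room k u' q' b + e"
proof -
  obtain X where X: "X \<subseteq> {1..k}" "(\<Sum>i\<in>X. q i - u) \<le> a" "low_room k u q a = (\<Sum>i\<in>X. min (q i) u)"
    using low_room_attained[where k=k and u=u and q=q and a=a] by (elim exE conjE)
  from assms[OF X(1,2)] obtain X' where X': "X' \<subseteq> {1..k}" "(\<Sum>i\<in>X'. q' i - u') \<le> b"
     "(\<Sum>i\<in>X. min (q i) u) + d \<le> (\<Sum>i\<in>X'. min (q' i) u') + e"
    by (elim exE conjE)
  have "(\<Sum>i\<in>X'. min (q' i) u') \<le> low_room k u' q' b" by (rule low_room_ge[OF X'(1,2)])
  with X(3) X'(3) show ?thesis by linarith
qed

lemma low_room_decr_high_le: assumes "q r > u"
  shows "low_room k u (q(r := q r - 1)) a \<le> low_room k u q (Suc a)"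
proof -
  have "low_room k u (q(r := q r - 1)) a + 0 \<le> low_room k u q (Suc a) + 0"
  proof (rule low_room_transfer)
    fix X assume X: "X \<subseteq> {1..k}" "(\<Sum>i\<in>X. (q(r := q r - 1)) i - u) \<le> a"
    have f: "finite X" using X(1) by (rule finite_agent_set)
    have c: "(\<Sum>i\<in>X. (q(r := q r - 1)) i - u) + (if r\<in>X then q r - u else 0) = (\<Sum>i\<in>X. q i - u) + (if r \<in> X then q r - 1 - u else 0)"
      using sum_upd_eq[OF f, of "\<lambda>x. x - u" q r "q r - 1"] by simp
    have v: "(\<Sum>i\<in>X. min ((q(r := q r - 1)) i) u) + (if r\<in>X then min (q r) u else 0) = (\<Sum>i\<in>X. min (q i) u) + (if r \<in> X then min (q r - 1) u else 0)"
      using sum_upd_eq[OF f, of "\<lambda>x. min x u" q r "q r - 1"] by simp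
    have "(\<Sum>i\<in>X. q i - u) \<le> Suc a" using c X(2) assms by (auto split: if_splits)
    moreover have "(\<Sum>i\<in>X. min ((q(r := q r - 1)) i) u) + 0 \<le> (\<Sum>i\<in>X. min (q i) u) + 0"
      using v assms by (auto split: if_splits)
    ultimately show "\<exists>X'. X' \<subseteq> {1..k} \<and> (\<Sum>i\<in>X'. q i - u) \<le> Suc a \<and>
        (\<Sum>i\<in>X. min ((q(r := q r - 1)) i) u) + 0 \<le> (\<Sum>i\<in>X'. min (q i) u) + 0"
      using X(1) by blast
  qed
  then show ?thesis by simp
qed

lemma low_room_decr_high_ge: assumes "q r > u"
  shows "low_room k u q a \<le> low_room k u (q(r := q r - 1)) a"
proof -
  have "low_room k u q a + 0 \<le> low_room k u (q(r := q r - 1)) a + 0"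
  proof (rule low_room_transfer)
    fix X assume X: "X \<subseteq> {1..k}" "(\<Sum>i\<in>X. q i - u) \<le> a"
    have f: "finite X" using X(1) by (rule finite_agent_set)
    have c: "(\<Sum>i\<in>X. (q(r := q r - 1)) i - u) + (if r\<in>X then q r - u else 0) = (\<Sum>i\<in>X. q i - u) + (if r \<in> X then q r - 1 - u else 0)"
      using sum_upd_eq[OF f, of "\<lambda>x. x - u" q r "q r - 1"] by simp
    have v: "(\<Sum>i\<in>X. min ((q(r := q r - 1)) i) u) + (if r\<in>X then min (q r) u else 0) = (\<Sum>i\<in>X. min (q i) u) + (if r \<in> X then min (q r - 1) u else 0)"
      using sum_upd_eq[OF f, of "\<lambda>x. min x u" q r "q r - 1"] by simp
    have "(\<Sum>i\<in>X. (q(r := q r - 1)) i - u) \<le> a" using c X(2) assms by (auto split: if_splits)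
    moreover have "(\<Sum>i\<in>X. min (q i) u) + 0 \<le> (\<Sum>i\<in>X. min ((q(r := q r - 1)) i) u) + 0"
      using v assms by (auto split: if_splits)
    ultimately show "\<exists>X'. X' \<subseteq> {1..k} \<and> (\<Sum>i\<in>X'. (q(r := q r - 1)) i - u) \<le> a \<and>
        (\<Sum>i\<in>X. min (q i) u) + 0 \<le> (\<Sum>i\<in>X'. min ((q(r := q r - 1)) i) u) + 0"
      using X(1) by blast
  qed
  then show ?thesis by simp
qed

lemma low_room_decr_low_lt: assumes "q r \<le> u" "1 \<le> q r" "r \<in> {1..k}"
  shows "low_room k u (q(r := q r - 1)) a + 1 \<le> low_room k u q a"
proof -
  have "low_room k u (q(r := q r - 1)) a + 1 \<le> low_room k u q a + 0"
  proof (rule low_room_transfer)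
    fix X assume X: "X \<subseteq> {1..k}" "(\<Sum>i\<in>X. (q(r := q r - 1)) i - u) \<le> a"
    let ?Y = "insert r X"
    have Y: "?Y \<subseteq> {1..k}" using X(1) assms(3) by blast
    have f: "finite ?Y" using Y by (rule finite_agent_set)
    have fX: "finite X" using X(1) by (rule finite_agent_set)
    have c: "(\<Sum>i\<in>?Y. (q(r := q r - 1)) i - u) + (if r\<in>?Y then q r - u else 0) = (\<Sum>i\<in>?Y. q i - u) + (if r \<in> ?Y then q r - 1 - u else 0)"
      using sum_upd_eq[OF f, of "\<lambda>x. x - u" q r "q r - 1"] by simp
    have v: "(\<Sum>i\<in>?Y. min ((q(r := q r - 1)) i) u) + (if r\<in>?Y then min (q r) u else 0) = (\<Sum>i\<in>?Y. min (q i) u) + (if r \<in> ?Y then min (q r - 1) u else 0)"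
      using sum_upd_eq[OF f, of "\<lambda>x. min x u" q r "q r - 1"] by simp
    have c2: "(\<Sum>i\<in>?Y. (q(r := q r - 1)) i - u) = (\<Sum>i\<in>X. (q(r := q r - 1)) i - u)"
      using assms(1) fX by (simp add: sum.insert_if)
    have v2: "(\<Sum>i\<in>X. min ((q(r := q r - 1)) i) u) \<le> (\<Sum>i\<in>?Y. min ((q(r := q r - 1)) i) u)"
      by (rule sum_mono2[OF f]) auto
    have "(\<Sum>i\<in>?Y. q i - u) \<le> a" using c c2 X(2) assms by simp
    moreover have "(\<Sum>i\<in>X. min ((q(r := q r - 1)) i) u) + 1 \<le> (\<Sum>i\<in>?Y. min (q i) u) + 0"
      using v v2 assms by simp
    ultimately show "\<exists>X'. X' \<subseteq> {1..k} \<and> (\<Sum>i\<in>X'. q i - u) \<le> a \<and>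
        (\<Sum>i\<in>X. min ((q(r := q r - 1)) i) u) + 1 \<le> (\<Sum>i\<in>X'. min (q i) u) + 0"
      using Y by blast
  qed
  then show ?thesis by simp
qed

lemma low_room_decr_low_ge: assumes "q r \<le> u"
  shows "low_room k u q a \<le> low_room k u (q(r := q r - 1)) a + 1"
proof -
  have "low_room k u q a + 0 \<le> low_room k u (q(r := q r - 1)) a + 1"
  proof (rule low_room_transfer)
    fix X assume X: "X \<subseteq> {1..k}" "(\<Sum>i\<in>X. q i - u) \<le> a"
    have f: "finite X" using X(1) by (rule finite_agent_set)
    have c: "(\<Sum>i\<in>X. (q(r := q r - 1)) i - u) + (if r\<in>X then q r - u else 0) = (\<Sum>i\<in>X. q i - u) + (if r \<in> X then q r - 1 - u else 0)"
      using sum_upd_eq[OF f, of "\<lambda>x. x - u" q r "q r - 1"] by simp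
    have v: "(\<Sum>i\<in>X. min ((q(r := q r - 1)) i) u) + (if r\<in>X then min (q r) u else 0) = (\<Sum>i\<in>X. min (q i) u) + (if r \<in> X then min (q r - 1) u else 0)"
      using sum_upd_eq[OF f, of "\<lambda>x. min x u" q r "q r - 1"] by simp
    have z: "q r - u = 0" "q r - 1 - u = 0" using assms by auto
    have "(\<Sum>i\<in>X. (q(r := q r - 1)) i - u) \<le> a" using c X(2) assms by (cases "r \<in> X"; simp del: fun_upd_apply; linarith)
    moreover have "(\<Sum>i\<in>X. min (q i) u) + 0 \<le> (\<Sum>i\<in>X. min ((q(r := q r - 1)) i) u) + 1"
      using v assms by (auto split: if_splits)
    ultimately show "\<exists>X'. X' \<subseteq> {1..k} \<and> (\<Sum>i\<in>X'. (q(r := q r - 1)) i - u) \<le> a \<and>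
        (\<Sum>i\<in>X. min (q i) u) + 0 \<le> (\<Sum>i\<in>X'. min ((q(r := q r - 1)) i) u) + 1"
      using X(1) by blast
  qed
  then show ?thesis by simp
qed

text \<open>Raising the threshold turns high slots into low ones and can only increase
  \<open>low_room\<close>.\<close>
lemma low_room_threshold_mono: assumes "u0 \<le> u"
  shows "low_room k u0 q a \<le> low_room k u q a"
proof -
  have "low_room k u0 q a + 0 \<le> low_room k u q a + 0"
  proof (rule low_room_transfer)
    fix X assume X: "X \<subseteq> {1..k}" "(\<Sum>i\<in>X. q i - u0) \<le> a"
    have "(\<Sum>i\<in>X. q i - u) \<le> (\<Sum>i\<in>X. q i - u0)" by (rule sum_mono) (use assms in auto)
    moreover have "(\<Sum>i\<in>X. min (q i) u0) \<le> (\<Sum>i\<in>X. min (q i) u)" by (rule sum_mono) (use assms in auto)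
    ultimately show "\<exists>X'. X' \<subseteq> {1..k} \<and> (\<Sum>i\<in>X'. q i - u) \<le> a \<and>
        (\<Sum>i\<in>X. min (q i) u0) + 0 \<le> (\<Sum>i\<in>X'. min (q i) u) + 0"
      using X by (intro exI[of _ X]) auto
  qed
  then show ?thesis by simp
qed

lemma decrement_swap_sums:
  fixes q :: "nat \<Rightarrow> nat"
  assumes f: "finite X" and r: "r \<notin> X" and j: "j \<in> X" "q r \<le> q j" and u: "u < q r"
  shows "(\<Sum>i\<in>insert r (X - {j}). (q(r := q r - 1)) i - u) + 1 \<le> (\<Sum>i\<in>X. q i - u)"
    and "(\<Sum>i\<in>X. min (q i) u) \<le> (\<Sum>i\<in>insert r (X - {j}). min ((q(r := q r - 1)) i) u)"
proof -
  have rn: "r \<notin> X - {j}" using r by blast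
  have "(\<Sum>i\<in>insert r (X - {j}). (q(r := q r - 1)) i - u) = (q r - 1 - u) + (\<Sum>i\<in>X - {j}. q i - u)"
    using rn f sum_notin_upd[OF rn, of "\<lambda>x. x - u" q "q r - 1"] by simp
  moreover have "(\<Sum>i\<in>X. q i - u) = (q j - u) + (\<Sum>i\<in>X - {j}. q i - u)"
    using sum.remove[OF f j(1), of "\<lambda>i. q i - u"] by simp
  moreover have "q r - 1 - u + 1 \<le> q j - u" using j(2) u by presburger
  ultimately show "(\<Sum>i\<in>insert r (X - {j}). (q(r := q r - 1)) i - u) + 1 \<le> (\<Sum>i\<in>X. q i - u)"
    by linarith
  have "(\<Sum>i\<in>insert r (X - {j}). min ((q(r := q r - 1)) i) u) = min (q r - 1) u + (\<Sum>i\<in>X - {j}. min (q i) u)"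
    using rn f sum_notin_upd[OF rn, of "\<lambda>x. min x u" q "q r - 1"] by simp
  moreover have "(\<Sum>i\<in>X. min (q i) u) = min (q j) u + (\<Sum>i\<in>X - {j}. min (q i) u)"
    using sum.remove[OF f j(1), of "\<lambda>i. min (q i) u"] by simp
  ultimately show "(\<Sum>i\<in>X. min (q i) u) \<le> (\<Sum>i\<in>insert r (X - {j}). min ((q(r := q r - 1)) i) u)"
    using j(2) u by simp
qed

lemma low_room_decr_high_refill:
  assumes u: "q r > u" and r: "r \<in> {1..k}" and small: "(\<Sum>i\<in>{i\<in>{1..k}. q i < q r}. q i - u) \<le> a"
  shows "low_room k u q (Suc a) \<le> low_room k u (q(r := q r - 1)) a"
proof -
  have "low_room k u q (Suc a) + 0 \<le> low_room k u (q(r := q r - 1)) a + 0"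
  proof (rule low_room_transfer)
    fix X assume X: "X \<subseteq> {1..k}" "(\<Sum>i\<in>X. q i - u) \<le> Suc a"
    have f: "finite X" using X(1) by (rule finite_agent_set)
    show "\<exists>X'. X' \<subseteq> {1..k} \<and> (\<Sum>i\<in>X'. (q(r := q r - 1)) i - u) \<le> a \<and>
        (\<Sum>i\<in>X. min (q i) u) + 0 \<le> (\<Sum>i\<in>X'. min ((q(r := q r - 1)) i) u) + 0"
    proof (cases "r \<in> X")
      case True
      have c: "(\<Sum>i\<in>X. (q(r := q r - 1)) i - u) + (q r - u) = (\<Sum>i\<in>X. q i - u) + (q r - 1 - u)"
        using sum_upd_eq[OF f, of "\<lambda>x. x - u" q r "q r - 1"] True by simp
      have v: "(\<Sum>i\<in>X. min ((q(r := q r - 1)) i) u) + min (q r) u = (\<Sum>i\<in>X. min (q i) u) + min (q r - 1) u"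
        using sum_upd_eq[OF f, of "\<lambda>x. min x u" q r "q r - 1"] True by simp
      show ?thesis using c v X u by (intro exI[of _ X]) auto
    next
      case False
      show ?thesis
      proof (cases "\<exists>j\<in>X. q r \<le> q j")
        case True
        then obtain j where j: "j \<in> X" "q r \<le> q j" by blast
        show ?thesis using decrement_swap_sums[OF f False j u] X r
          by (intro exI[of _ "insert r (X - {j})"]) auto
      next
        case none_larger: False
        have "(\<Sum>i\<in>X. q i - u) \<le> (\<Sum>i\<in>{i\<in>{1..k}. q i < q r}. q i - u)"
          by (rule sum_mono2) (use X(1) none_larger in auto)
        then show ?thesis
          using X(1) small sum_notin_upd[OF False, of "\<lambda>x. x - u" q "q r - 1"]
            sum_notin_upd[OF False, of "\<lambda>x. min x u" q "q r - 1"]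
          by (intro exI[of _ X]) auto
      qed
    qed
  qed
  then show ?thesis by simp
qed

lemma sorted_prefix_exchange_card:
  assumes so: "sorted_on k q" and h: "1 \<le> h" "h \<le> k" and X: "X \<subseteq> {1..k}"
    and lt: "(\<Sum>i\<in>X. q i - u) < (\<Sum>i=1..h. q i - u)"
  shows "card (X - {1..h}) < card {i\<in>{1..h} - X. u < q i}"
proof -
  define X1 where "X1 = X \<inter> {1..h}"
  define Mp where "Mp = {i\<in>{1..h} - X. u < q i}"
  have fX: "finite X" using X by (rule finite_agent_set)
  have "(\<Sum>i\<in>X. q i - u) = (\<Sum>i\<in>X1. q i - u) + (\<Sum>i\<in>X - {1..h}. q i - u)"
    unfolding X1_def by (rule sum.Int_Diff[OF fX])
  moreover have "(\<Sum>i=1..h. q i - u) = (\<Sum>i\<in>X1. q i - u) + (\<Sum>i\<in>{1..h} - X. q i - u)"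
    unfolding X1_def Int_commute[of X] by (rule sum.Int_Diff) simp
  moreover have "(\<Sum>i\<in>{1..h} - X. q i - u) = (\<Sum>i\<in>Mp. q i - u)"
    unfolding Mp_def by (rule sum.mono_neutral_right) auto
  moreover have "(\<Sum>i\<in>Mp. q i - u) \<le> card Mp * (q h - u)"
    using sum_bounded_above[of Mp "\<lambda>i. q i - u" "q h - u"] sorted_onD[OF so, of _ h] h
    unfolding Mp_def by (simp add: diff_le_mono)
  moreover have "card (X - {1..h}) * (q h - u) \<le> (\<Sum>i\<in>X - {1..h}. q i - u)"
    using sum_bounded_below[of "X - {1..h}" "q h - u" "\<lambda>i. q i - u"] sorted_onD[OF so h(1)] X
    by (force intro: diff_le_mono)
  ultimately have "card (X - {1..h}) * (q h - u) < card Mp * (q h - u)" using lt by linarith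
  then show ?thesis unfolding Mp_def using mult_less_cancel2 by blast
qed

lemma low_sum_exchange:
  assumes so: "sorted_on k q" and h: "1 \<le> h" "h \<le> k" and X: "X \<subseteq> {1..k}"
    and lt: "(\<Sum>i\<in>X. q i - u) < (\<Sum>i=1..h. q i - u)"
  shows "(\<Sum>i\<in>X. min (q i) u) + u \<le> (\<Sum>i=1..h. min (q i) u)"
proof -
  define X1 where "X1 = X \<inter> {1..h}"
  define Mp where "Mp = {i\<in>{1..h} - X. u < q i}"
  have fX: "finite X" using X by (rule finite_agent_set)
  have cc: "card (X - {1..h}) + 1 \<le> card Mp"
    using sorted_prefix_exchange_card[OF so h X lt] unfolding Mp_def by simp
  have "(\<Sum>i\<in>X. min (q i) u) = (\<Sum>i\<in>X1. min (q i) u) + (\<Sum>i\<in>X - {1..h}. min (q i) u)"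
    unfolding X1_def by (rule sum.Int_Diff[OF fX])
  moreover have "(\<Sum>i=1..h. min (q i) u) = (\<Sum>i\<in>X1. min (q i) u) + (\<Sum>i\<in>{1..h} - X. min (q i) u)"
    unfolding X1_def Int_commute[of X] by (rule sum.Int_Diff) simp
  moreover have "(\<Sum>i\<in>X - {1..h}. min (q i) u) \<le> card (X - {1..h}) * u"
    using sum_bounded_above[of "X - {1..h}" "\<lambda>i. min (q i) u" u] by simp
  moreover have "card Mp * u = (\<Sum>i\<in>Mp. min (q i) u)" by (simp add: Mp_def)
  moreover have "(\<Sum>i\<in>Mp. min (q i) u) \<le> (\<Sum>i\<in>{1..h} - X. min (q i) u)"
    by (rule sum_mono2) (auto simp: Mp_def)
  moreover have "(card (X - {1..h}) + 1) * u \<le> card Mp * u" using cc by (rule mult_le_mono1)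
  ultimately show ?thesis by (simp add: algebra_simps)
qed

lemma low_room_below_prefix:
  assumes "sorted_on k q" "1 \<le> h" "h \<le> k" "a < (\<Sum>i=1..h. q i - u)"
  shows "low_room k u q a + u \<le> (\<Sum>i=1..h. min (q i) u)"
proof -
  obtain X where X: "X \<subseteq> {1..k}" "(\<Sum>i\<in>X. q i - u) \<le> a" "low_room k u q a = (\<Sum>i\<in>X. min (q i) u)"
    using low_room_attained[of k q u a] by blast
  have "(\<Sum>i\<in>X. q i - u) < (\<Sum>i=1..h. q i - u)" using X(2) assms(4) by linarith
  from low_sum_exchange[OF assms(1-3) X(1) this] X(3) show ?thesis by simp
qed

section \<open>Forced high placements and the potential\<close>

text \<open>\<open>min_high k u q j\<close>: the least number of high placements among any \<open>j\<close> consecutive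
  tasks, since \<open>a\<close> high placements leave room for at most \<open>low_room k u q a\<close> low ones.\<close>
definition min_high :: "nat \<Rightarrow> nat \<Rightarrow> (nat \<Rightarrow> nat) \<Rightarrow> nat \<Rightarrow> nat" where
  "min_high k u q j = (LEAST a. j \<le> a + low_room k u q a)"

lemma min_high_spec: "j \<le> min_high k u q j + low_room k u q (min_high k u q j)"
  unfolding min_high_def by (rule LeastI[of _ j]) simp

lemma min_high_le: "j \<le> a + low_room k u q a \<Longrightarrow> min_high k u q j \<le> a"
  unfolding min_high_def by (rule Least_le)

lemma min_high_0 [simp]: "min_high k u q 0 = 0"
  using min_high_le[of 0 0 k u q] by simp

lemma min_high_decr_le: assumes "1 \<le> q r" "r \<in> {1..k}"
  shows "min_high k u q (Suc j) \<le> min_high k u (q(r := q r - 1)) j + (if q r > u then 1 else 0)"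
proof -
  let ?a = "min_high k u (q(r := q r - 1)) j"
  have s: "j \<le> ?a + low_room k u (q(r := q r - 1)) ?a" by (rule min_high_spec)
  show ?thesis
  proof (cases "q r > u")
    case True
    have "low_room k u (q(r := q r - 1)) ?a \<le> low_room k u q (Suc ?a)" by (rule low_room_decr_high_le[where q=q and r=r, OF True])
    then have "Suc j \<le> Suc ?a + low_room k u q (Suc ?a)" using s by linarith
    then show ?thesis using True min_high_le by simp
  next
    case False
    have "low_room k u (q(r := q r - 1)) ?a + 1 \<le> low_room k u q ?a" by (rule low_room_decr_low_lt) (use False assms in auto)
    then have "Suc j \<le> ?a + low_room k u q ?a" using s by linarith
    then show ?thesis using False min_high_le by simp
  qed
qed

lemma min_high_decr_ge: "min_high k u (q(r := q r - 1)) j \<le> min_high k u q (Suc j)"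
proof -
  let ?a = "min_high k u q (Suc j)"
  have s: "Suc j \<le> ?a + low_room k u q ?a" by (rule min_high_spec)
  have "low_room k u q ?a \<le> low_room k u (q(r := q r - 1)) ?a + 1"
  proof (cases "q r > u")
    case True then show ?thesis using low_room_decr_high_ge[where q=q and r=r and k=k and a="?a", OF True] by linarith
  next
    case False then show ?thesis using low_room_decr_low_ge[of q r u k ?a] by simp
  qed
  then have "j \<le> ?a + low_room k u (q(r := q r - 1)) ?a" using s by linarith
  then show ?thesis by (rule min_high_le)
qed

lemma min_high_decr_high_lt: assumes "q r > u" "r \<in> {1..k}" "(\<Sum>i\<in>{i\<in>{1..k}. q i < q r}. q i - u) < min_high k u q (Suc j)"
  shows "min_high k u (q(r := q r - 1)) j + 1 \<le> min_high k u q (Suc j)"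
proof -
  obtain b where b: "min_high k u q (Suc j) = Suc b" using assms(3) by (cases "min_high k u q (Suc j)") auto
  have P: "(\<Sum>i\<in>{i\<in>{1..k}. q i < q r}. q i - u) \<le> b" using assms(3) b by simp
  have s: "Suc j \<le> Suc b + low_room k u q (Suc b)" using min_high_spec[of "Suc j" k u q] b by simp
  have "low_room k u q (Suc b) \<le> low_room k u (q(r := q r - 1)) b" by (rule low_room_decr_high_refill[OF assms(1,2) P])
  then have "j \<le> b + low_room k u (q(r := q r - 1)) b" using s by linarith
  then have "min_high k u (q(r := q r - 1)) j \<le> b" by (rule min_high_le)
  then show ?thesis using b by simp
qed

lemma min_high_threshold_antimono: assumes "u0 \<le> u" shows "min_high k u q j \<le> min_high k u0 q j"
proof -
  let ?a = "min_high k u0 q j"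
  have "j \<le> ?a + low_room k u0 q ?a" by (rule min_high_spec)
  moreover have "low_room k u0 q ?a \<le> low_room k u q ?a" by (rule low_room_threshold_mono[OF assms])
  ultimately have "j \<le> ?a + low_room k u q ?a" by linarith
  then show ?thesis by (rule min_high_le)
qed

definition num_H :: "(nat \<Rightarrow> bool) \<Rightarrow> nat \<Rightarrow> nat" where
  "num_H isL j = (\<Sum>i=1..j. if isL i then 0 else 1)"

lemma num_H_0[simp]: "num_H isL 0 = 0" by (simp add: num_H_def)

lemma num_H_shift: "num_H isL (Suc j) = (if isL 1 then 0 else 1) + num_H (\<lambda>i. isL (Suc i)) j"
proof -
  have "num_H isL (Suc j) = (if isL 1 then 0 else 1) + (\<Sum>i=Suc 1..Suc j. if isL i then 0 else 1)"
    unfolding num_H_def by (subst sum.atLeast_Suc_atMost) auto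
  also have "(\<Sum>i=Suc 1..Suc j. if isL i then 0 else (1::nat)) = num_H (\<lambda>i. isL (Suc i)) j"
    unfolding num_H_def by (rule sum.shift_bounds_cl_Suc_ivl)
  finally show ?thesis .
qed

lemma num_H_le: "num_H isL j \<le> j"
  unfolding num_H_def by (rule order.trans[OF sum_mono[of _ _ "\<lambda>_. 1"]]) auto

lemma num_H_mono: "j \<le> j' \<Longrightarrow> num_H isL j \<le> num_H isL j'"
  unfolding num_H_def by (rule sum_mono2) auto

lemma num_H_pos: "\<not> isL 1 \<Longrightarrow> 1 \<le> j \<Longrightarrow> 1 \<le> num_H isL j"
proof -
  assume a: "\<not> isL 1" "1 \<le> j"
  have "num_H isL 1 = 1" using a(1) by (simp add: num_H_def)
  then show ?thesis using num_H_mono[OF a(2), of isL] by simp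
qed

definition num_L :: "(nat \<Rightarrow> bool) \<Rightarrow> nat \<Rightarrow> nat" where
  "num_L isL j = (\<Sum>i=1..j. if isL i then 1 else 0)"

lemma num_L_plus_num_H: "num_L isL j + num_H isL j = j"
proof -
  have "num_L isL j + num_H isL j = (\<Sum>i=1..j. (if isL i then 1 else 0) + (if isL i then 0 else 1))"
    unfolding num_L_def num_H_def by (simp add: sum.distrib)
  also have "\<dots> = (\<Sum>i=1..j. (1::nat))" by (rule sum.cong) auto
  finally show ?thesis by simp
qed

lemma card_L_eq_num_L: "card {i\<in>{1..j}. isL i} = num_L isL j"
proof -
  have "card {i\<in>{1..j}. isL i} = (\<Sum>i\<in>{i\<in>{1..j}. isL i}. (1::nat))" by simp
  also have "\<dots> = (\<Sum>i=1..j. if isL i then 1 else 0)" by (rule sum.inter_filter) simp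
  finally show ?thesis unfolding num_L_def .
qed

lemma num_L_mono: "j \<le> j' \<Longrightarrow> num_L isL j \<le> num_L isL j'"
  unfolding num_L_def by (rule sum_mono2) auto

text \<open>The potential: over all prefixes, the forced high placements that cannot be
  filled by H tasks. It is a lower bound on the L tasks placed in high slots.\<close>
definition potential :: "nat \<Rightarrow> nat \<Rightarrow> (nat \<Rightarrow> nat) \<Rightarrow> (nat \<Rightarrow> bool) \<Rightarrow> nat \<Rightarrow> int" where
  "potential k u q isL N = Max ((\<lambda>j. int (min_high k u q j) - int (num_H isL j)) ` {0..N})"

lemma potential_ge: "j \<le> N \<Longrightarrow> int (min_high k u q j) - int (num_H isL j) \<le> potential k u q isL N"
  unfolding potential_def by (rule Max_ge) auto

lemma potential_attained: "\<exists>j\<le>N. potential k u q isL N = int (min_high k u q j) - int (num_H isL j)"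
proof -
  have "potential k u q isL N \<in> (\<lambda>j. int (min_high k u q j) - int (num_H isL j)) ` {0..N}"
    unfolding potential_def by (rule Max_in) auto
  then show ?thesis by auto
qed

lemma potential_nonneg: "0 \<le> potential k u q isL N"
  using potential_ge[of 0 N k u q isL] by simp

lemma potential_0: "potential k u q isL 0 = 0"
  unfolding potential_def by simp

lemma potential_step_lower:
  assumes "1 \<le> q r" "r \<in> {1..k}" "1 \<le> N"
  shows "potential k u q isL N \<le> (if isL 1 \<and> q r > u then 1 else 0) + potential k u (q(r := q r - 1)) (\<lambda>i. isL (Suc i)) (N - 1)"
proof -
  obtain j where j: "j \<le> N" "potential k u q isL N = int (min_high k u q j) - int (num_H isL j)"
    using potential_attained by blast
  have nn: "0 \<le> potential k u (q(r := q r - 1)) (\<lambda>i. isL (Suc i)) (N - 1)" by (rule potential_nonneg)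
  show ?thesis
  proof (cases j)
    case 0
    then show ?thesis using j nn by simp
  next
    case (Suc j')
    have n1: "min_high k u q (Suc j') \<le> min_high k u (q(r := q r - 1)) j' + (if q r > u then 1 else 0)"
      by (rule min_high_decr_le[where q=q and r=r and k=k and u=u and j=j', OF assms(1,2)])
    have h1: "num_H isL (Suc j') = (if isL 1 then 0 else 1) + num_H (\<lambda>i. isL (Suc i)) j'" by (rule num_H_shift)
    have p: "int (min_high k u (q(r := q r - 1)) j') - int (num_H (\<lambda>i. isL (Suc i)) j') \<le> potential k u (q(r := q r - 1)) (\<lambda>i. isL (Suc i)) (N - 1)"
      by (rule potential_ge) (use j Suc in auto)
    show ?thesis using j(2) Suc n1 h1 p by (auto split: if_splits)
  qed
qed

section \<open>Every allocation places many L tasks early\<close>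

definition remaining :: "nat \<Rightarrow> (nat \<Rightarrow> nat) \<Rightarrow> nat \<Rightarrow> nat \<Rightarrow> nat" where
  "remaining m y j r = m - card {s\<in>{1..j}. y s = r}"

lemma card_filter_Suc: "card {s\<in>{1..Suc j}. y s = r} = card {s\<in>{1..j}. y s = r} + (if y (Suc j) = r then 1 else 0)"
proof -
  have e: "{s\<in>{1..Suc j}. y s = r} = (if y (Suc j) = r then insert (Suc j) {s\<in>{1..j}. y s = r} else {s\<in>{1..j}. y s = r})"
    by (auto simp: le_Suc_eq)
  show ?thesis unfolding e by simp
qed

lemma remaining_Suc: "remaining m y (Suc j) = (remaining m y j)(y (Suc j) := remaining m y j (y (Suc j)) - 1)"
proof (rule ext)
  fix r
  show "remaining m y (Suc j) r = ((remaining m y j)(y (Suc j) := remaining m y j (y (Suc j)) - 1)) r"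
    unfolding remaining_def card_filter_Suc[of j y] by (cases "r = y (Suc j)") auto
qed

lemma remaining_0: "remaining m y 0 = (\<lambda>_. m)"
  by (rule ext) (simp add: remaining_def)

lemma alloc_step:
  assumes "is_alloc k m n y" "j < n"
  shows "1 \<le> remaining m y j (y (Suc j))" "y (Suc j) \<in> {1..k}"
proof -
  have A: "\<forall>t \<in> {1..n}. y t \<in> {1..k}" "\<forall>r \<in> {1..k}. card {t \<in> {1..n}. y t = r} = m"
    using assms(1) unfolding is_alloc_def by auto
  have sj: "Suc j \<in> {1..n}" using assms(2) by simp
  show r: "y (Suc j) \<in> {1..k}" using A(1) sj by (rule bspec)
  have m: "card {t\<in>{1..n}. y t = y (Suc j)} = m" using A(2) r by (rule bspec)
  have sub: "{s\<in>{1..j}. y s = y (Suc j)} \<subseteq> {t\<in>{1..n}. y t = y (Suc j)}" using assms(2) by auto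
  have mem: "Suc j \<in> {t\<in>{1..n}. y t = y (Suc j)}" using assms(2) by simp
  have nmem: "Suc j \<notin> {s\<in>{1..j}. y s = y (Suc j)}" by simp
  have ne: "{s\<in>{1..j}. y s = y (Suc j)} \<noteq> {t\<in>{1..n}. y t = y (Suc j)}"
  proof
    assume "{s\<in>{1..j}. y s = y (Suc j)} = {t\<in>{1..n}. y t = y (Suc j)}"
    then show False using mem nmem by simp
  qed
  have ps: "{s\<in>{1..j}. y s = y (Suc j)} \<subset> {t\<in>{1..n}. y t = y (Suc j)}" by (rule psubsetI[OF sub ne])
  have fin: "finite {t\<in>{1..n}. y t = y (Suc j)}" by simp
  have "card {s\<in>{1..j}. y s = y (Suc j)} < card {t\<in>{1..n}. y t = y (Suc j)}" by (rule psubset_card_mono[OF fin ps])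
  then have "card {s\<in>{1..j}. y s = y (Suc j)} < m" using m by simp
  then show "1 \<le> remaining m y j (y (Suc j))" unfolding remaining_def by simp
qed

text \<open>\<open>high_L_count m n u T L y j\<close>: the L tasks after step \<open>j\<close> placed into a high slot,
  i.e. while their agent had more than \<open>u\<close> free slots.\<close>
definition high_L_count :: "nat \<Rightarrow> nat \<Rightarrow> nat \<Rightarrow> (nat \<Rightarrow> real) \<Rightarrow> real \<Rightarrow> (nat \<Rightarrow> nat) \<Rightarrow> nat \<Rightarrow> nat" where
  "high_L_count m n u T L y j = card {s\<in>{Suc j..n}. T s = L \<and> u < remaining m y (s - 1) (y s)}"

lemma high_L_count_end: "high_L_count m n u T L y n = 0"
  by (simp add: high_L_count_def)

lemma high_L_count_step: assumes "j < n"
  shows "high_L_count m n u T L y j = (if T (Suc j) = L \<and> u < remaining m y j (y (Suc j)) then 1 else 0) + high_L_count m n u T L y (Suc j)"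
proof -
  have e: "{s\<in>{Suc j..n}. T s = L \<and> u < remaining m y (s - 1) (y s)} =
      (if T (Suc j) = L \<and> u < remaining m y j (y (Suc j)) then insert (Suc j) {s\<in>{Suc (Suc j)..n}. T s = L \<and> u < remaining m y (s - 1) (y s)}
       else {s\<in>{Suc (Suc j)..n}. T s = L \<and> u < remaining m y (s - 1) (y s)})"
    using assms by (auto simp: Suc_le_eq le_less)
  show ?thesis unfolding high_L_count_def e by simp
qed

lemma high_L_count_lower:
  assumes al: "is_alloc k m n y" and j: "j \<le> n"
  shows "potential k u (remaining m y j) (\<lambda>i. T (j + i) = L) (n - j) \<le> int (high_L_count m n u T L y j)"
  using j
proof (induction "n - j" arbitrary: j)
  case 0
  then have "j = n" by simp
  then show ?case by (simp add: potential_0 high_L_count_end)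
next
  case (Suc d)
  then have jn: "j < n" by simp
  have IH: "potential k u (remaining m y (Suc j)) (\<lambda>i. T (Suc j + i) = L) (n - Suc j) \<le> int (high_L_count m n u T L y (Suc j))"
    using Suc.hyps(1)[of "Suc j"] Suc.hyps(2) jn by simp
  have p: "potential k u (remaining m y j) (\<lambda>i. T (j + i) = L) (n - j) \<le>
      (if T (j + 1) = L \<and> u < remaining m y j (y (Suc j)) then 1 else 0) +
      potential k u ((remaining m y j)(y (Suc j) := remaining m y j (y (Suc j)) - 1)) (\<lambda>i. T (j + Suc i) = L) (n - j - 1)"
    using potential_step_lower[of "remaining m y j" "y (Suc j)" k "n - j" u "\<lambda>i. T (j + i) = L"] alloc_step[OF al jn] jn by simp
  have e1: "(remaining m y j)(y (Suc j) := remaining m y j (y (Suc j)) - 1) = remaining m y (Suc j)" by (rule remaining_Suc[symmetric])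
  have e2: "(\<lambda>i. T (j + Suc i) = L) = (\<lambda>i. T (Suc j + i) = L)" by simp
  have e3: "n - j - 1 = n - Suc j" by simp
  show ?case using p IH high_L_count_step[where m=m and u=u and T=T and L=L and y=y, OF jn] unfolding e1 e2 e3
    by (cases "T (Suc j) = L \<and> u < remaining m y j (y (Suc j))"; simp; linarith)
qed

section \<open>ThresholdAllocation\<close>

definition ta_accepts :: "nat \<Rightarrow> (nat \<Rightarrow> nat) \<Rightarrow> (nat \<Rightarrow> real) \<Rightarrow> nat \<Rightarrow> bool" where
  "ta_accepts k ms S g = (cap0 ms g \<noteq> cap0 ms (g - 1) \<and> (\<exists>h \<in> {g..k}. ta_test ms S g h))"

lemma ta_loop_cases: "ta_loop k ms S g = 0 \<or> (1 \<le> ta_loop k ms S g \<and> ta_loop k ms S g \<le> g \<and> ta_accepts k ms S (ta_loop k ms S g)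
   \<and> (\<forall>g'. ta_loop k ms S g < g' \<and> g' \<le> g \<longrightarrow> \<not> ta_accepts k ms S g'))"
proof (induction g)
  case 0 then show ?case by simp
next
  case (Suc g)
  show ?case
  proof (cases "ta_accepts k ms S (Suc g)")
    case True
    then show ?thesis unfolding ta_accepts_def by auto
  next
    case False
    then have e: "ta_loop k ms S (Suc g) = ta_loop k ms S g" unfolding ta_accepts_def by auto
    show ?thesis unfolding e using Suc.IH False le_Suc_eq by auto
  qed
qed

lemma ta_loop_nonzero: "1 \<le> g0 \<Longrightarrow> g0 \<le> g \<Longrightarrow> ta_accepts k ms S g0 \<Longrightarrow> ta_loop k ms S g \<noteq> 0"
proof (induction g)
  case 0 then show ?case by simp
next
  case (Suc g)
  show ?case
  proof (cases "ta_accepts k ms S (Suc g)")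
    case True
    then show ?thesis unfolding ta_accepts_def by auto
  next
    case False
    then have e: "ta_loop k ms S (Suc g) = ta_loop k ms S g" unfolding ta_accepts_def by auto
    have "g0 \<le> g" using Suc.prems False by (cases "g0 = Suc g") auto
    then show ?thesis unfolding e using Suc by auto
  qed
qed

lemma cap0_pos[simp]: "1 \<le> i \<Longrightarrow> cap0 q i = q i"
  by (simp add: cap0_def)

lemma cap0_0[simp]: "cap0 q 0 = 0"
  by (simp add: cap0_def)

text \<open>With some capacity left, ThresholdAllocation returns a genuine agent: the first
  agent with a free slot always accepts (its test with \<open>h = k\<close> has \<open>ZL = 0\<close>).\<close>
lemma TA_choice:
  assumes so: "sorted_on k q" and pos: "1 \<le> (\<Sum>i=1..k. q i)"
  shows "1 \<le> TA k q S \<and> TA k q S \<le> k \<and> ta_accepts k q S (TA k q S) \<and>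
         (\<forall>g'. TA k q S < g' \<and> g' \<le> k \<longrightarrow> \<not> ta_accepts k q S g')"
proof -
  obtain i where i: "i \<in> {1..k}" "0 < q i" using sum_pos_witness[of "{1..k}" q] pos by auto
  define g0 where "g0 = (LEAST g. 1 \<le> g \<and> 0 < q g)"
  have g0: "1 \<le> g0" "0 < q g0" unfolding g0_def by (rule LeastI2[of _ i], use i in auto)+
  have g0le: "g0 \<le> i" unfolding g0_def by (rule Least_le) (use i in auto)
  have w0: "cap0 q (g0 - 1) = 0"
  proof (cases "g0 = 1")
    case True then show ?thesis by simp
  next
    case False
    have "g0 - 1 < g0" using g0(1) by simp
    then have "\<not> (1 \<le> g0 - 1 \<and> 0 < q (g0 - 1))" unfolding g0_def by (rule not_less_Least)
    then show ?thesis using False g0(1) by simp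
  qed
  have t: "ta_test q S g0 k" unfolding ta_test_def Let_def w0 by simp
  have c0: "ta_accepts k q S g0" unfolding ta_accepts_def using w0 g0 t g0le i by auto
  have ne: "TA k q S \<noteq> 0" unfolding TA_def by (rule ta_loop_nonzero[OF g0(1) _ c0]) (use g0le i in auto)
  then show ?thesis using ta_loop_cases[of k q S k] unfolding TA_def by auto
qed

lemma TA_gap:
  assumes so: "sorted_on k q" and pos: "1 \<le> (\<Sum>i=1..k. q i)"
  shows "cap0 q (TA k q S - 1) < q (TA k q S)"
proof -
  let ?g = "TA k q S"
  have g: "1 \<le> ?g" "?g \<le> k" "ta_accepts k q S ?g" using TA_choice[OF so pos] by auto
  have "cap0 q (?g - 1) \<le> q ?g"
    using sorted_onD[OF so, of "?g - 1" ?g] g(1,2) by (cases "?g = 1") auto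
  then show ?thesis using g(1,3) unfolding ta_accepts_def by auto
qed

definition ZL :: "(nat \<Rightarrow> nat) \<Rightarrow> nat \<Rightarrow> nat \<Rightarrow> nat" where
  "ZL q g h = (\<Sum>i = 1..h - 1. min (cap0 q i) (cap0 q (g - 1)))"
definition ZH :: "(nat \<Rightarrow> nat) \<Rightarrow> nat \<Rightarrow> nat \<Rightarrow> nat" where
  "ZH q g h = (\<Sum>i = g..h. cap0 q i - cap0 q (g - 1))"

lemma ta_test_ZL_ZH: "ta_test q S g h = (card {i \<in> {1..ZL q g h + ZH q g h}. S i > S 1} \<ge> ZL q g h)"
  unfolding ta_test_def ZL_def ZH_def Let_def by simp

lemma sorted_below_choice:
  assumes so: "sorted_on k q" and g: "g \<le> k" and i: "1 \<le> i" "i < g"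
  shows "q i \<le> cap0 q (g - 1)"
proof -
  have "1 \<le> g - 1" using i by simp
  then show ?thesis using sorted_onD[OF so i(1), of "g - 1"] i g by simp
qed

lemma ZL_as_prefix: "ZL q g h = (\<Sum>i=1..h-1. min (q i) (cap0 q (g - 1)))"
  unfolding ZL_def by (rule sum.cong) auto

lemma ZH_as_prefix:
  assumes so: "sorted_on k q" and g: "1 \<le> g" "g \<le> h" "h \<le> k"
  shows "ZH q g h = (\<Sum>i=1..h. q i - cap0 q (g - 1))"
proof -
  have "(\<Sum>i=1..h. q i - cap0 q (g - 1))
      = (\<Sum>i=1..g-1. q i - cap0 q (g - 1)) + (\<Sum>i=g..h. q i - cap0 q (g - 1))"
    by (rule sum_split_at) (use g in auto)
  moreover have "(\<Sum>i=1..g-1. q i - cap0 q (g - 1)) = 0"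
    using sorted_below_choice[OF so, of g] g by (intro sum.neutral) auto
  moreover have "ZH q g h = (\<Sum>i=g..h. q i - cap0 q (g - 1))"
    unfolding ZH_def by (rule sum.cong) (use g in auto)
  ultimately show ?thesis by simp
qed

text \<open>The window of a test at \<open>(g, h)\<close> never exceeds the slots of agents \<open>1..h\<close>, so
  it lies within the remaining task sequence.\<close>
lemma ZL_ZH_le_prefix:
  assumes "1 \<le> g" "g \<le> h"
  shows "ZL q g h + ZH q g h \<le> (\<Sum>i=1..h. q i)"
proof -
  define w where "w = cap0 q (g - 1)"
  have zl: "ZL q g h = (\<Sum>i=1..h-1. min (q i) w)" unfolding ZL_def w_def by (rule sum.cong) auto
  have zh: "ZH q g h = (\<Sum>i=g..h. q i - w)" unfolding ZH_def w_def by (rule sum.cong) (use assms in auto)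
  have "ZH q g h \<le> (\<Sum>i=1..h. q i - w)" unfolding zh by (rule sum_mono2) (use assms in auto)
  also have "\<dots> = (\<Sum>i=1..h-1. q i - w) + (q h - w)" by (rule sum_split_last) (use assms in auto)
  finally have a: "ZH q g h \<le> (\<Sum>i=1..h-1. q i - w) + (q h - w)" .
  have "(\<Sum>i=1..h-1. min (q i) w) + (\<Sum>i=1..h-1. q i - w) = (\<Sum>i=1..h-1. min (q i) w + (q i - w))"
    by (simp add: sum.distrib)
  also have "\<dots> = (\<Sum>i=1..h-1. q i)" by (rule sum.cong) auto
  finally have b: "(\<Sum>i=1..h-1. min (q i) w) + (\<Sum>i=1..h-1. q i - w) = (\<Sum>i=1..h-1. q i)" .
  have c: "(\<Sum>i=1..h. q i) = (\<Sum>i=1..h-1. q i) + q h" by (rule sum_split_last) (use assms in auto)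
  show ?thesis using a b c zl by linarith
qed

lemma ZL_ZH_le_total: assumes "1 \<le> g" "g \<le> h" "h \<le> k" "N = (\<Sum>i=1..k. q i)"
  shows "ZL q g h + ZH q g h \<le> N"
proof -
  have "(\<Sum>i=1..h. q i) \<le> (\<Sum>i=1..k. q i)" by (rule sum_mono2) (use assms in auto)
  then show ?thesis using ZL_ZH_le_prefix[OF assms(1,2), of q] assms(4) by linarith
qed

lemma card_exceeding_first:
  assumes vals: "\<forall>i\<in>{1..N}. S i = H \<or> S i = L" and HL: "(H::real) < L" and Z: "Z \<le> N" and N: "1 \<le> N"
  shows "S 1 = L \<Longrightarrow> card {i\<in>{1..Z}. S i > S 1} = 0"
    and "S 1 \<noteq> L \<Longrightarrow> card {i\<in>{1..Z}. S i > S 1} = Z - num_H (\<lambda>i. S i = L) Z"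
proof -
  assume s1: "S 1 = L"
  have "{i\<in>{1..Z}. S i > S 1} = {}"
  proof (rule ccontr)
    assume "{i\<in>{1..Z}. S i > S 1} \<noteq> {}"
    then obtain i where i: "i \<in> {1..Z}" "S i > S 1" by blast
    then have "i \<in> {1..N}" using Z by auto
    then have "S i = H \<or> S i = L" using vals by blast
    then show False using i s1 HL by auto
  qed
  then show "card {i\<in>{1..Z}. S i > S 1} = 0" by simp
next
  assume s1: "S 1 \<noteq> L"
  then have sH: "S 1 = H" using vals N by auto
  have "{i\<in>{1..Z}. S i > S 1} = {i\<in>{1..Z}. S i = L}"
  proof (intro Collect_cong conj_cong refl)
    fix i assume "i \<in> {1..Z}"
    then have "i \<in> {1..N}" using Z by auto
    then have "S i = H \<or> S i = L" using vals by blast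
    then show "(S i > S 1) = (S i = L)" using sH HL by auto
  qed
  then show "card {i\<in>{1..Z}. S i > S 1} = Z - num_H (\<lambda>i. S i = L) Z"
    using card_L_eq_num_L[of Z "\<lambda>i. S i = L"] num_L_plus_num_H[of "\<lambda>i. S i = L" Z] by simp
qed

lemma first_crossing:
  fixes F :: "nat \<Rightarrow> nat"
  assumes "F 0 \<le> b" "b < F k"
  shows "\<exists>h. 1 \<le> h \<and> h \<le> k \<and> F (h - 1) \<le> b \<and> b < F h"
  using assms(2)
proof (induction k)
  case (Suc k)
  show ?case
  proof (cases "b < F k")
    case True
    then show ?thesis using Suc.IH by (metis le_SucI)
  qed (use Suc.prems in auto)
qed (use assms(1) in simp)

text \<open>If every test of agent \<open>g\<close> fails for an H task, then with threshold
  \<open>cap0 q (g - 1)\<close> every prefix contains more H tasks than forced high placements.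
  The window of the first failing test that reaches beyond the available budget
  witnesses this.\<close>
lemma min_high_lt_num_H_if_rejected:
  assumes so: "sorted_on k q" and N: "N = (\<Sum>i=1..k. q i)" and g: "1 \<le> g" "g \<le> k"
    and fail: "\<forall>h\<in>{g..k}. ZH q g h < num_H isL (ZL q g h + ZH q g h)"
    and nL: "\<not> isL 1" and j: "1 \<le> j" "j \<le> N"
  shows "min_high k (cap0 q (g - 1)) q j < num_H isL j"
proof -
  define w where "w = cap0 q (g - 1)"
  define b where "b = num_H isL j - 1"
  have Hjb: "num_H isL j = Suc b" using num_H_pos[of isL j, OF nL j(1)] b_def by simp
  define F where "F h = (\<Sum>i=1..h. q i - w)" for h
  have "j \<le> b + low_room k w q b"
  proof (cases "b < F k")
    case True
    obtain h0 where h0: "1 \<le> h0" "h0 \<le> k" "F (h0 - 1) \<le> b" "b < F h0"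
      using first_crossing[of F b k] True by (auto simp: F_def)
    have gh0: "g \<le> h0"
    proof (rule ccontr)
      assume "\<not> g \<le> h0"
      then have "F h0 = 0"
        unfolding F_def w_def using sorted_below_choice[OF so g(2)] by (intro sum.neutral) auto
      then show False using h0 by simp
    qed
    have zh: "ZH q g h0 = F h0" unfolding F_def w_def by (rule ZH_as_prefix) (use so g gh0 h0 in auto)
    have G: "ZL q g h0 \<le> low_room k w q b"
      unfolding ZL_as_prefix w_def[symmetric] by (rule low_room_ge) (use h0 in \<open>auto simp: F_def\<close>)
    define Z where "Z = ZL q g h0 + ZH q g h0"
    have f: "ZH q g h0 < num_H isL Z" using fail gh0 h0 unfolding Z_def by auto
    show ?thesis
    proof (cases "j \<le> Z")
      case True
      then show ?thesis using num_L_mono[OF True, of isL] num_L_plus_num_H[of isL Z]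
          num_L_plus_num_H[of isL j] f G Hjb Z_def by linarith
    next
      case False
      then show ?thesis using num_H_mono[of Z j isL] f zh h0 Hjb by linarith
    qed
  next
    case False
    have G: "(\<Sum>i=1..k. min (q i) w) \<le> low_room k w q b"
      by (rule low_room_ge) (use False in \<open>auto simp: F_def\<close>)
    have "(\<Sum>i=1..k. min (q i) w) + F k = (\<Sum>i=1..k. min (q i) w + (q i - w))"
      unfolding F_def by (simp add: sum.distrib)
    also have "\<dots> = N" unfolding N by (rule sum.cong) auto
    finally show ?thesis using G False j(2) by linarith
  qed
  then have "min_high k w q j \<le> b" by (rule min_high_le)
  then show ?thesis using Hjb w_def by simp
qed

lemma gap_prefix_sums:
  assumes so: "sorted_on k q" and uw: "u < w" "w < q g" and g: "1 \<le> g" "g \<le> h" "h \<le> k"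
  shows "(\<Sum>i=1..g-1. q i - u) + (\<Sum>i=g..h. q i - w) + Suc (h - g) \<le> (\<Sum>i=1..h. q i - u)"
    and "(\<Sum>i=1..h. min (q i) u) = (\<Sum>i=1..g-1. min (q i) u) + Suc (h - g) * u"
proof -
  have big: "q g \<le> q i" if "i \<in> {g..h}" for i using sorted_onD[OF so, of g i] that g by auto
  have "(\<Sum>i=g..h. q i - w) + Suc (h - g) = (\<Sum>i=g..h. (q i - w) + 1)"
    by (subst sum.distrib) (use g in simp)
  also have "\<dots> \<le> (\<Sum>i=g..h. q i - u)" by (rule sum_mono) (use big uw in force)
  finally show "(\<Sum>i=1..g-1. q i - u) + (\<Sum>i=g..h. q i - w) + Suc (h - g) \<le> (\<Sum>i=1..h. q i - u)"
    using sum_split_at[of g h "\<lambda>i. q i - u"] g by linarith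
  have "(\<Sum>i=g..h. min (q i) u) = (\<Sum>i=g..h. u)" by (rule sum.cong) (use big uw in force)+
  then show "(\<Sum>i=1..h. min (q i) u) = (\<Sum>i=1..g-1. min (q i) u) + Suc (h - g) * u"
    using sum_split_at[of g h "\<lambda>i. min (q i) u"] g by (simp add: Suc_diff_le)
qed

lemma ZL_at_gap:
  assumes so: "sorted_on k q" and g: "2 \<le> g" "g \<le> h" "h \<le> k" and gap: "q (g - 1) < q g"
  shows "ZL q g h = (\<Sum>i=1..g-1. q i) + (h - g) * q (g - 1)"
proof -
  define w where "w = q (g - 1)"
  have cw: "cap0 q (g - 1) = w" using g by (simp add: w_def)
  have low: "min (q i) w = q i" if "1 \<le> i" "i < g" for i
    using sorted_below_choice[OF so, of g i] that g cw by simp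
  have high: "min (q i) w = w" if "g \<le> i" "i \<le> h" for i
    using sorted_onD[OF so, of g i] that g gap by (simp add: w_def)
  have "ZL q g h = (\<Sum>i=1..g-1. min (q i) w) + (\<Sum>i=g..h-1. min (q i) w)"
    unfolding ZL_as_prefix cw by (rule sum_split_at) (use g in auto)
  also have "\<dots> = (\<Sum>i=1..g-1. q i) + (\<Sum>i=g..h-1. w)"
    using low high g by (intro arg_cong2[where f="(+)"] sum.cong) auto
  finally show ?thesis using g by (simp add: w_def)
qed

text \<open>If an H task is accepted by agent \<open>g \<ge> 2\<close> whose predecessor has capacity
  \<open>w = q (g - 1)\<close> above \<open>u\<close>, the high capacity of the agents before \<open>g\<close> is dominated by
  the potential term of the accepting window \<open>Z = ZL + ZH\<close>: otherwise the forced high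
  placements of \<open>Z\<close> would leave too little low room (\<open>low_room_below_prefix\<close>).\<close>
lemma prefix_high_le_potential_term:
  assumes so: "sorted_on k q" and g: "2 \<le> g" "g \<le> k"
    and uw: "u < q (g - 1)" "q (g - 1) < q g" and h: "g \<le> h" "h \<le> k"
    and pass: "num_H isL (ZL q g h + ZH q g h) \<le> ZH q g h"
  shows "int (\<Sum>i=1..g-1. q i - u)
    \<le> int (min_high k u q (ZL q g h + ZH q g h)) - int (num_H isL (ZL q g h + ZH q g h))"
proof -
  define w where "w = q (g - 1)"
  define Z where "Z = ZL q g h + ZH q g h"
  define P where "P = (\<Sum>i=1..g-1. q i - u)"
  have zh: "ZH q g h = (\<Sum>i=g..h. q i - w)" unfolding ZH_def by (rule sum.cong) (use g in \<open>auto simp: w_def\<close>)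
  have zl: "ZL q g h = (\<Sum>i=1..g-1. q i) + (h - g) * w"
    unfolding w_def by (rule ZL_at_gap[OF so g(1) h uw(2)])
  have split: "(\<Sum>i=1..g-1. min (q i) u) + P = (\<Sum>i=1..g-1. q i)"
    unfolding P_def sum.distrib[symmetric] by (rule sum.cong) auto
  note sums = gap_prefix_sums[OF so, of u w g h]
  have key: "P + ZH q g h \<le> min_high k u q Z"
  proof (rule ccontr)
    assume "\<not> P + ZH q g h \<le> min_high k u q Z"
    then have a: "min_high k u q Z < P + ZH q g h" by simp
    have lt: "min_high k u q Z < (\<Sum>i=1..h. q i - u)"
      using a sums(1) uw g h zh unfolding P_def w_def by fastforce
    have "low_room k u q (min_high k u q Z) + u \<le> (\<Sum>i=1..h. min (q i) u)"
      by (rule low_room_below_prefix[OF so _ h(2) lt]) (use g h in auto)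
    then have "low_room k u q (min_high k u q Z) \<le> (\<Sum>i=1..g-1. min (q i) u) + (h - g) * u"
      using sums(2) uw g h by (simp add: w_def)
    moreover have "Z \<le> min_high k u q Z + low_room k u q (min_high k u q Z)" by (rule min_high_spec)
    moreover have "(h - g) * u \<le> (h - g) * w" using uw by (simp add: w_def)
    ultimately show False using a split zl Z_def by linarith
  qed
  show ?thesis using key pass unfolding Z_def[symmetric] P_def[symmetric] by linarith
qed

section \<open>Algorithm 1 places few L tasks early\<close>

lemma potential_le_by_terms:
  assumes "\<And>j. j \<le> N \<Longrightarrow> c + (int (min_high k u q j) - int (num_H isL j)) \<le> P"
  shows "c + potential k u q isL N \<le> P"
  using potential_attained[of N k u q isL] assms by auto

context
  fixes k N g :: nat and q :: "nat \<Rightarrow> nat" and S :: "nat \<Rightarrow> real" and H L :: real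
  assumes so: "sorted_on k q" and N: "N = (\<Sum>i=1..k. q i)" "1 \<le> N"
    and vals: "\<forall>i\<in>{1..N}. S i = H \<or> S i = L" and HL: "H < L"
    and g_def: "g = TA k q S"
begin

lemma step_choice: "1 \<le> g" "g \<le> k" "ta_accepts k q S g"
  "\<And>g'. g < g' \<Longrightarrow> g' \<le> k \<Longrightarrow> \<not> ta_accepts k q S g'"
  using TA_choice[OF so, of S] N unfolding g_def[symmetric] by auto

lemma step_choice_gap: "cap0 q (g - 1) < q g"
  using TA_gap[OF so, of S] N unfolding g_def by simp

lemma step_below_choice: "1 \<le> i \<Longrightarrow> i < g \<Longrightarrow> q i \<le> cap0 q (g - 1)"
  using sorted_below_choice[OF so step_choice(2)] by blast

lemma step_less_choice: "i \<in> {1..k} \<Longrightarrow> q i < q g \<Longrightarrow> i < g"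
  using sorted_onD[OF so step_choice(1), of i] by (cases "i < g") auto

lemma step_test_iff_H:
  assumes "S 1 \<noteq> L" "1 \<le> g'" "g' \<le> h'" "h' \<le> k"
  shows "ta_test q S g' h' \<longleftrightarrow> num_H (\<lambda>i. S i = L) (ZL q g' h' + ZH q g' h') \<le> ZH q g' h'"
proof -
  have Z: "ZL q g' h' + ZH q g' h' \<le> N" by (rule ZL_ZH_le_total) (use assms N in auto)
  show ?thesis
    using card_exceeding_first(2)[OF vals HL Z N(2) assms(1)]
      num_H_le[of "\<lambda>i. S i = L" "ZL q g' h' + ZH q g' h'"]
    unfolding ta_test_ZL_ZH by linarith
qed

text \<open>If the first task is an L task, the accepting test has \<open>ZL = 0\<close>, so every agent
  before \<open>g\<close> is already full.\<close>
lemma step_L_empty_below: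
  assumes "S 1 = L" "1 \<le> i" "i < g"
  shows "q i = 0"
proof -
  obtain h where h: "h \<in> {g..k}" "ta_test q S g h"
    using step_choice(3) unfolding ta_accepts_def by blast
  have Z: "ZL q g h + ZH q g h \<le> N" by (rule ZL_ZH_le_total) (use step_choice(1) h N in auto)
  have "ZL q g h \<le> card {i\<in>{1..ZL q g h + ZH q g h}. S i > S 1}"
    using h(2) unfolding ta_test_ZL_ZH .
  then have "ZL q g h = 0" unfolding card_exceeding_first(1)[OF vals HL Z N(2) assms(1)] by simp
  moreover have "g - 1 \<in> {1..h - 1}" using assms(2,3) h(1) by auto
  ultimately have "min (cap0 q (g - 1)) (cap0 q (g - 1)) = 0"
    unfolding ZL_def by (subst (asm) sum_eq_0_iff) (auto dest!: bspec[of _ _ "g - 1"])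
  then show ?thesis using step_below_choice[OF assms(2,3)] by simp
qed

text \<open>If the first task is an H task and the chosen agent has no high slot at
  threshold \<open>u\<close>, then the first agent \<open>g'\<close> that does have one was rejected; the
  rejection shows that every prefix contains more H tasks than high placements.\<close>
lemma step_H_low_choice:
  assumes "S 1 \<noteq> L" "q g \<le> u" "1 \<le> j" "j \<le> N"
  shows "min_high k u q j < num_H (\<lambda>i. S i = L) j"
proof (cases "\<forall>i\<in>{1..k}. q i \<le> u")
  case True
  have "(\<Sum>i=1..k. min (q i) u) \<le> low_room k u q 0" by (rule low_room_ge) (use True in auto)
  moreover have "(\<Sum>i=1..k. min (q i) u) = N" unfolding N by (rule sum.cong) (use True in auto)
  ultimately have "min_high k u q j \<le> 0" using assms(4) by (intro min_high_le) simp
  then show ?thesis using num_H_pos[of "\<lambda>i. S i = L" j] assms(1,3) by simp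
next
  case False
  define g' where "g' = (LEAST i. 1 \<le> i \<and> i \<le> k \<and> u < q i)"
  have g': "1 \<le> g' \<and> g' \<le> k \<and> u < q g'"
    unfolding g'_def by (rule LeastI_ex) (use False in auto)
  have gg': "g < g'"
    using sorted_onD[OF so, of g' g] g' step_choice(2) assms(2) by (cases "g < g'") auto
  have w'u: "cap0 q (g' - 1) \<le> u"
  proof (cases "g' = 1")
    case False
    have "g' - 1 < g'" using g' by simp
    then have "\<not> (1 \<le> g' - 1 \<and> g' - 1 \<le> k \<and> u < q (g' - 1))"
      unfolding g'_def by (rule not_less_Least)
    then show ?thesis using False g' by auto
  qed simp
  have "\<not> ta_accepts k q S g'" by (rule step_choice(4)[OF gg']) (use g' in auto)
  moreover have "cap0 q g' \<noteq> cap0 q (g' - 1)" using g' w'u by simp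
  ultimately have rejected: "\<forall>h'\<in>{g'..k}.
      ZH q g' h' < num_H (\<lambda>i. S i = L) (ZL q g' h' + ZH q g' h')"
    using step_test_iff_H[OF assms(1)] g' unfolding ta_accepts_def by fastforce
  have "min_high k (cap0 q (g' - 1)) q j < num_H (\<lambda>i. S i = L) j"
    by (rule min_high_lt_num_H_if_rejected[OF so N(1) _ _ rejected _ assms(3,4)])
      (use g' assms(1) in auto)
  moreover have "min_high k u q j \<le> min_high k (cap0 q (g' - 1)) q j"
    by (rule min_high_threshold_antimono[OF w'u])
  ultimately show ?thesis by linarith
qed

text \<open>If the first task is an H task and the chosen agent has a high slot, the high
  capacity of the agents below \<open>g\<close> is dominated by the potential, witnessed at the
  window of the accepting test.\<close>
lemma step_H_high_choice:
  assumes "S 1 \<noteq> L" "u < q g" "0 < (\<Sum>i\<in>{i\<in>{1..k}. q i < q g}. q i - u)"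
  shows "int (\<Sum>i\<in>{i\<in>{1..k}. q i < q g}. q i - u) \<le> potential k u q (\<lambda>i. S i = L) N"
proof -
  obtain i where i: "i \<in> {1..k}" "q i < q g" "u < q i"
    using sum_pos_witness[of "{i\<in>{1..k}. q i < q g}" "\<lambda>i. q i - u"] assms(3) by auto
  have ig: "i < g" by (rule step_less_choice) (use i in auto)
  then have g2: "2 \<le> g" using i by auto
  have uw: "u < q (g - 1)" using step_below_choice[of i] ig i g2 by simp
  obtain h where h: "h \<in> {g..k}" "ta_test q S g h"
    using step_choice(3) unfolding ta_accepts_def by blast
  have pass: "num_H (\<lambda>i. S i = L) (ZL q g h + ZH q g h) \<le> ZH q g h"
    using step_test_iff_H[OF assms(1) step_choice(1), of h] h by auto
  have "{i\<in>{1..k}. q i < q g} \<subseteq> {1..g-1}" using step_less_choice by fastforce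
  then have "(\<Sum>i\<in>{i\<in>{1..k}. q i < q g}. q i - u) \<le> (\<Sum>i=1..g-1. q i - u)"
    by (intro sum_mono2) auto
  also have "int \<dots> \<le> int (min_high k u q (ZL q g h + ZH q g h))
      - int (num_H (\<lambda>i. S i = L) (ZL q g h + ZH q g h))"
    by (rule prefix_high_le_potential_term[OF so g2 step_choice(2) uw _ _ _ pass])
      (use step_choice_gap g2 h in auto)
  also have "\<dots> \<le> potential k u q (\<lambda>i. S i = L) N"
    by (rule potential_ge) (rule ZL_ZH_le_total, use step_choice(1) h N in auto)
  finally show ?thesis by simp
qed

text \<open>If the first task is an L task and the chosen agent has a high slot, using it
  removes a forced high placement: all agents with fewer slots are already full, so
  no low slot can be unlocked without a high placement.\<close>
lemma step_L_high_drop: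
  assumes L: "S 1 = L" and u: "u < q g"
  shows "min_high k u (q(g := q g - 1)) j + 1 \<le> min_high k u q (Suc j)"
proof (rule min_high_decr_high_lt[where q=q and r=g, OF u])
  show "g \<in> {1..k}" using step_choice(1,2) by simp
  have "(\<Sum>i\<in>{i\<in>{1..k}. q i < q g}. q i - u) = 0"
    by (rule sum.neutral) (use L step_less_choice step_L_empty_below in auto)
  moreover have "low_room k u q 0 = 0"
  proof -
    obtain X where X: "X \<subseteq> {1..k}" "(\<Sum>i\<in>X. q i - u) \<le> 0" "low_room k u q 0 = (\<Sum>i\<in>X. min (q i) u)"
      using low_room_attained[of k q u 0] by blast
    have "i < g" if "i \<in> X" for i
    proof (rule step_less_choice)
      show "i \<in> {1..k}" using X(1) that by blast
      have "q i \<le> u" using X(2) that finite_agent_set[OF X(1)] by (auto simp: sum_eq_0_iff)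
      then show "q i < q g" using u by simp
    qed
    then show ?thesis using X step_L_empty_below L by (auto intro!: sum.neutral)
  qed
  then have "0 < min_high k u q (Suc j)"
    using min_high_spec[of "Suc j" k u q] by (cases "min_high k u q (Suc j)") auto
  ultimately show "(\<Sum>i\<in>{i\<in>{1..k}. q i < q g}. q i - u) < min_high k u q (Suc j)" by simp
qed

text \<open>If the first task is an H task and the chosen agent has a high slot, every term
  of the remaining potential is dominated by the current potential: either the step
  removes a forced high placement, or the forced placements are covered by the high
  capacity below \<open>g\<close> (\<open>step_H_high_choice\<close>).\<close>
lemma step_H_high_bound:
  assumes S1: "S 1 \<noteq> L" and u: "u < q g" and jN: "Suc j \<le> N"
  shows "int (min_high k u (q(g := q g - 1)) j) - int (num_H (\<lambda>i. S (Suc i) = L) j)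
    \<le> potential k u q (\<lambda>i. S i = L) N"
proof -
  define Pg where "Pg = (\<Sum>i\<in>{i\<in>{1..k}. q i < q g}. q i - u)"
  have dec: "min_high k u (q(g := q g - 1)) j \<le> min_high k u q (Suc j)" by (rule min_high_decr_ge)
  have nn: "0 \<le> potential k u q (\<lambda>i. S i = L) N" by (rule potential_nonneg)
  consider "Pg < min_high k u q (Suc j)" | "min_high k u q (Suc j) \<le> Pg" by linarith
  then show ?thesis
  proof cases
    case 1
    have "min_high k u (q(g := q g - 1)) j + 1 \<le> min_high k u q (Suc j)"
      by (rule min_high_decr_high_lt[where q=q and r=g, OF u]) (use 1 step_choice(1,2) in \<open>auto simp: Pg_def\<close>)
    moreover have "num_H (\<lambda>i. S i = L) (Suc j) = 1 + num_H (\<lambda>i. S (Suc i) = L) j"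
      using num_H_shift[of "\<lambda>i. S i = L" j] S1 by simp
    moreover have "int (min_high k u q (Suc j)) - int (num_H (\<lambda>i. S i = L) (Suc j))
        \<le> potential k u q (\<lambda>i. S i = L) N"
      by (rule potential_ge[OF jN])
    ultimately show ?thesis by linarith
  next
    case 2
    have "int (min_high k u q (Suc j)) \<le> potential k u q (\<lambda>i. S i = L) N"
    proof (cases "0 < Pg")
      case True
      have "int Pg \<le> potential k u q (\<lambda>i. S i = L) N"
        unfolding Pg_def by (rule step_H_high_choice[OF S1 u True[unfolded Pg_def]])
      then show ?thesis using 2 by linarith
    qed (use 2 nn in simp)
    then show ?thesis using dec by linarith
  qed
qed

lemma potential_step_upper:
  "(if S 1 = L \<and> q g > u then 1 else 0) + potential k u (q(g := q g - 1)) (\<lambda>i. S (Suc i) = L) (N - 1)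
     \<le> potential k u q (\<lambda>i. S i = L) N"
proof (rule potential_le_by_terms)
  fix j assume "j \<le> N - 1"
  then have jN: "Suc j \<le> N" using N by auto
  have hs: "num_H (\<lambda>i. S i = L) (Suc j) = (if S 1 = L then 0 else 1) + num_H (\<lambda>i. S (Suc i) = L) j"
    by (rule num_H_shift)
  have vj: "int (min_high k u q (Suc j)) - int (num_H (\<lambda>i. S i = L) (Suc j)) \<le> potential k u q (\<lambda>i. S i = L) N"
    by (rule potential_ge[OF jN])
  have dec: "min_high k u (q(g := q g - 1)) j \<le> min_high k u q (Suc j)" by (rule min_high_decr_ge)
  have nn: "0 \<le> potential k u q (\<lambda>i. S i = L) N" by (rule potential_nonneg)
  show "(if S 1 = L \<and> q g > u then 1 else 0)
      + (int (min_high k u (q(g := q g - 1)) j) - int (num_H (\<lambda>i. S (Suc i) = L) j))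
      \<le> potential k u q (\<lambda>i. S i = L) N"
  proof (cases "S 1 = L"; cases "u < q g")
    assume "S 1 = L" "u < q g"
    then show ?thesis using step_L_high_drop[of u j] hs vj by simp
  next
    assume "S 1 = L" "\<not> u < q g"
    then show ?thesis using hs vj dec by simp
  next
    assume S1: "S 1 \<noteq> L" and "\<not> u < q g"
    then have "min_high k u q (Suc j) < num_H (\<lambda>i. S i = L) (Suc j)"
      by (intro step_H_low_choice) (use jN in auto)
    then show ?thesis using S1 hs dec nn by simp
  next
    assume "S 1 \<noteq> L" "u < q g"
    then show ?thesis using step_H_high_bound[OF _ _ jN] by simp
  qed
qed

end

lemma sorted_on_decrement:
  assumes "sorted_on k q" "1 \<le> g" "g \<le> k" "cap0 q (g - 1) < q g"
  shows "sorted_on k (q(g := q g - 1))"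
  unfolding sorted_on_def
proof (intro allI impI)
  fix i j assume ij: "1 \<le> i" "i \<le> j" "j \<le> k"
  have s: "q i \<le> q j" using sorted_onD[OF assms(1) ij] .
  show "(q(g := q g - 1)) i \<le> (q(g := q g - 1)) j"
  proof (cases "j = g")
    case True
    show ?thesis
    proof (cases "i = g")
      case True then show ?thesis using \<open>j = g\<close> by simp
    next
      case False
      then have "i < g" using ij True by simp
      then have "q i \<le> cap0 q (g - 1)" using sorted_below_choice[OF assms(1) assms(3) ij(1)] by simp
      then show ?thesis using False True assms(4) by simp
    qed
  next
    case False
    then show ?thesis using s by auto
  qed
qed

lemma sum_decrement:
  fixes q :: "nat \<Rightarrow> nat"
  assumes "g \<in> {1..k}" "1 \<le> q g"
  shows "(\<Sum>r=1..k. (q(g := q g - 1)) r) + 1 = (\<Sum>r=1..k. q r)"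
  using sum_upd_eq[of "{1..k}" "\<lambda>x. x" q g "q g - 1"] assms by simp

lemma alg_cap_Suc_upd: "alg_cap k ms T (Suc j) = (alg_cap k ms T j)(alg1 k ms T (Suc j) := alg_cap k ms T j (alg1 k ms T (Suc j)) - 1)"
  by (rule ext) (simp add: alg1_def)

lemma alg1_Suc: "alg1 k ms T (Suc j) = TA k (alg_cap k ms T j) (\<lambda>i. T (j + i))"
  by (simp add: alg1_def)

lemma alg_invariant:
  assumes n: "n = k * m" and j: "j \<le> n"
  shows "sorted_on k (alg_cap k (\<lambda>_. m) T j) \<and>
         (\<forall>r\<in>{1..k}. alg_cap k (\<lambda>_. m) T j r + card {s\<in>{1..j}. alg1 k (\<lambda>_. m) T s = r} = m) \<and>
         (\<forall>s\<in>{1..j}. alg1 k (\<lambda>_. m) T s \<in> {1..k}) \<and>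
         (\<Sum>r=1..k. alg_cap k (\<lambda>_. m) T j r) = n - j"
  using j
proof (induction j)
  case 0
  then show ?case using n by (simp add: sorted_on_def)
next
  case (Suc j)
  let ?q = "alg_cap k (\<lambda>_. m) T j"
  let ?x = "alg1 k (\<lambda>_. m) T"
  let ?g = "?x (Suc j)"
  have IH: "sorted_on k ?q" "\<forall>r\<in>{1..k}. ?q r + card {s\<in>{1..j}. ?x s = r} = m"
    "\<forall>s\<in>{1..j}. ?x s \<in> {1..k}" "(\<Sum>r=1..k. ?q r) = n - j"
    using Suc by auto
  have pos: "1 \<le> (\<Sum>r=1..k. ?q r)" using IH(4) Suc.prems by simp
  have g: "1 \<le> ?g" "?g \<le> k" using TA_choice[OF IH(1) pos] unfolding alg1_Suc by auto
  have gap: "cap0 ?q (?g - 1) < ?q ?g" using TA_gap[OF IH(1) pos] unfolding alg1_Suc .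
  have eq: "alg_cap k (\<lambda>_. m) T (Suc j) = ?q(?g := ?q ?g - 1)" by (rule alg_cap_Suc_upd)
  have "alg_cap k (\<lambda>_. m) T (Suc j) r + card {s\<in>{1..Suc j}. ?x s = r} = m" if "r \<in> {1..k}" for r
  proof -
    have "?q r + card {s\<in>{1..j}. ?x s = r} = m" using IH(2) that by blast
    then show ?thesis using gap unfolding eq card_filter_Suc by (cases "?g = r") auto
  qed
  moreover have "sorted_on k (alg_cap k (\<lambda>_. m) T (Suc j))"
    unfolding eq by (rule sorted_on_decrement[OF IH(1) g gap])
  moreover have "\<forall>s\<in>{1..Suc j}. ?x s \<in> {1..k}" using IH(3) g by (auto simp: le_Suc_eq)
  moreover have "(\<Sum>r=1..k. alg_cap k (\<lambda>_. m) T (Suc j) r) = n - Suc j"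
    unfolding eq using sum_decrement[of ?g k ?q] g gap IH(4) by simp
  ultimately show ?case by blast
qed

lemma high_L_count_alg_upper:
  assumes n: "n = k * m" and vals: "\<forall>t\<in>{1..n}. T t = H \<or> T t = L" and HL: "H < L" and j: "j \<le> n"
  shows "int (high_L_count m n u T L (alg1 k (\<lambda>_. m) T) j) \<le> potential k u (alg_cap k (\<lambda>_. m) T j) (\<lambda>i. T (j + i) = L) (n - j)"
  using j
proof (induction "n - j" arbitrary: j)
  case 0
  then have "j = n" by simp
  then show ?case by (simp add: potential_0 high_L_count_end)
next
  case (Suc d)
  then have jn: "j < n" by simp
  let ?q = "alg_cap k (\<lambda>_. m) T j"
  let ?x = "alg1 k (\<lambda>_. m) T"
  let ?g = "?x (Suc j)"
  have IH: "int (high_L_count m n u T L ?x (Suc j)) \<le> potential k u (alg_cap k (\<lambda>_. m) T (Suc j)) (\<lambda>i. T (Suc j + i) = L) (n - Suc j)"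
    using Suc.hyps(1)[of "Suc j"] Suc.hyps(2) jn by simp
  have inv: "sorted_on k ?q" "\<forall>r\<in>{1..k}. ?q r + card {s\<in>{1..j}. ?x s = r} = m"
      "(\<Sum>r=1..k. ?q r) = n - j"
    using alg_invariant[OF n, of j T] jn by auto
  have gk: "?g \<in> {1..k}" using alg_invariant[OF n, of "Suc j" T] jn by auto
  have stg: "remaining m ?x j ?g = ?q ?g" using inv(2) gk unfolding remaining_def by (metis add_diff_cancel_right')
  have gdef: "?g = TA k ?q (\<lambda>i. T (j + i))" by (rule alg1_Suc)
  have vals': "\<forall>i\<in>{1..n - j}. T (j + i) = H \<or> T (j + i) = L"
  proof
    fix i assume "i \<in> {1..n - j}"
    then have "j + i \<in> {1..n}" by auto
    then show "T (j + i) = H \<or> T (j + i) = L" using vals by blast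
  qed
  have P: "(if T (j + 1) = L \<and> ?q ?g > u then 1 else 0) + potential k u (?q(?g := ?q ?g - 1)) (\<lambda>i. T (j + Suc i) = L) (n - j - 1)
         \<le> potential k u ?q (\<lambda>i. T (j + i) = L) (n - j)"
    using potential_step_upper[OF inv(1) inv(3)[symmetric] _ vals' HL gdef, of u] jn by simp
  have e1: "?q(?g := ?q ?g - 1) = alg_cap k (\<lambda>_. m) T (Suc j)" by (rule alg_cap_Suc_upd[symmetric])
  have e2: "(\<lambda>i. T (j + Suc i) = L) = (\<lambda>i. T (Suc j + i) = L)" by simp
  have e3: "n - j - 1 = n - Suc j" by simp
  have R: "high_L_count m n u T L ?x j = (if T (Suc j) = L \<and> u < ?q ?g then 1 else 0) + high_L_count m n u T L ?x (Suc j)"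
    using high_L_count_step[where m=m and u=u and T=T and L=L and y="?x", OF jn] stg by simp
  show ?case using P IH R unfolding e1 e2 e3
    by (cases "T (Suc j) = L \<and> u < ?q ?g"; simp; linarith)
qed

text \<open>An L task lies in a high slot at threshold \<open>m - c\<close> exactly when its position is
  at most \<open>c\<close>; hence \<open>high_L_count\<close> counts the L tasks in positions \<open>\<le> c\<close>.\<close>
lemma pos_Suc: assumes "1 \<le> s" shows "pos y s = Suc (card {s'\<in>{1..s-1}. y s' = y s})"
proof -
  have e: "{s'\<in>{1..s}. y s' = y s} = insert s {s'\<in>{1..s-1}. y s' = y s}" using assms by auto
  have "s \<notin> {s'\<in>{1..s-1}. y s' = y s}" by auto
  then show ?thesis unfolding pos_def e by simp
qed

lemma remaining_gt_iff_pos: assumes "1 \<le> s" "c \<le> m"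
  shows "(m - c < remaining m y (s - 1) (y s)) = (pos y s \<le> c)"
  unfolding remaining_def pos_Suc[OF assms(1)] using assms(2) by arith

lemma count_early_L_eq: assumes "c \<le> m"
  shows "card {t\<in>{1..n}. T t = L \<and> pos y t \<le> c} = high_L_count m n (m - c) T L y 0"
proof -
  have "{t\<in>{1..n}. T t = L \<and> pos y t \<le> c} = {s\<in>{Suc 0..n}. T s = L \<and> m - c < remaining m y (s - 1) (y s)}"
  proof (intro Collect_cong)
    fix t
    show "(t \<in> {1..n} \<and> T t = L \<and> pos y t \<le> c) = (t \<in> {Suc 0..n} \<and> T t = L \<and> m - c < remaining m y (t - 1) (y t))"
      using remaining_gt_iff_pos[of t c m y] assms by auto
  qed
  then show ?thesis unfolding high_L_count_def by simp
qed

text \<open>Main comparison: for every \<open>c\<close>, Algorithm 1 puts no more L tasks into positions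
  \<open>\<le> c\<close> than any other allocation, since both counts are squeezed by the potential.\<close>
lemma alg_minimizes_early_L:
  assumes n: "n = k * m" and vals: "\<forall>t\<in>{1..n}. T t = H \<or> T t = L" and HL: "H < L"
    and al: "is_alloc k m n y" and c: "c \<le> m"
  shows "card {t\<in>{1..n}. T t = L \<and> pos (alg1 k (\<lambda>_. m) T) t \<le> c} \<le> card {t\<in>{1..n}. T t = L \<and> pos y t \<le> c}"
proof -
  have u: "int (high_L_count m n (m - c) T L (alg1 k (\<lambda>_. m) T) 0) \<le> potential k (m - c) (alg_cap k (\<lambda>_. m) T 0) (\<lambda>i. T (0 + i) = L) (n - 0)"
    by (rule high_L_count_alg_upper[OF n vals HL]) simp
  have l: "potential k (m - c) (remaining m y 0) (\<lambda>i. T (0 + i) = L) (n - 0) \<le> int (high_L_count m n (m - c) T L y 0)"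
    by (rule high_L_count_lower[OF al]) simp
  have "alg_cap k (\<lambda>_. m) T 0 = remaining m y 0" by (simp add: remaining_0)
  then have "int (high_L_count m n (m - c) T L (alg1 k (\<lambda>_. m) T) 0) \<le> int (high_L_count m n (m - c) T L y 0)" using u l by simp
  then show ?thesis unfolding count_early_L_eq[OF c] by simp
qed

lemma alg1_is_alloc:
  assumes n: "n = k * m"
  shows "is_alloc k m n (alg1 k (\<lambda>_. m) T)"
proof -
  let ?x = "alg1 k (\<lambda>_. m) T"
  have inv: "\<forall>r\<in>{1..k}. alg_cap k (\<lambda>_. m) T n r + card {s\<in>{1..n}. ?x s = r} = m"
      "\<forall>s\<in>{1..n}. ?x s \<in> {1..k}" "(\<Sum>r=1..k. alg_cap k (\<lambda>_. m) T n r) = 0"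
    using alg_invariant[OF n, of n T] by auto
  have "\<forall>r\<in>{1..k}. alg_cap k (\<lambda>_. m) T n r = 0"
    using inv(3) sum_eq_0_iff[of "{1..k}" "alg_cap k (\<lambda>_. m) T n"] by simp
  then show ?thesis unfolding is_alloc_def using inv(1,2) by auto
qed

section \<open>Cost decomposition\<close>

text \<open>The tasks of one agent, ranked by index, occupy the positions \<open>1..m\<close>; in a finite
  set of naturals the rank map is a bijection onto \<open>1..card A\<close>.\<close>
lemma rank_bij_betw:
  fixes A :: "nat set"
  assumes fA: "finite A"
  shows "bij_betw (\<lambda>t. card {s\<in>A. s \<le> t}) A {1..card A}"
proof -
  define rk where "rk t = card {s\<in>A. s \<le> t}" for t
  have lt: "rk s < rk t" if "s \<in> A" "t \<in> A" "s < t" for s t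
  proof -
    have "t \<in> {s'\<in>A. s' \<le> t}" "t \<notin> {s'\<in>A. s' \<le> s}" using that by auto
    moreover have "{s'\<in>A. s' \<le> s} \<subseteq> {s'\<in>A. s' \<le> t}" using that by auto
    ultimately have "{s'\<in>A. s' \<le> s} \<subset> {s'\<in>A. s' \<le> t}" by blast
    then show ?thesis unfolding rk_def by (rule psubset_card_mono[rotated]) (simp add: fA)
  qed
  have inj: "inj_on rk A"
    by (rule inj_onI) (metis lt less_irrefl linorder_neqE_nat)
  have sub: "rk ` A \<subseteq> {1..card A}"
  proof
    fix x assume "x \<in> rk ` A"
    then obtain t where t: "t \<in> A" "x = rk t" by blast
    have "0 < rk t" unfolding rk_def using t fA by (subst card_gt_0_iff) auto
    moreover have "rk t \<le> card A" unfolding rk_def by (rule card_mono[OF fA]) auto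
    ultimately show "x \<in> {1..card A}" using t by simp
  qed
  have "rk ` A = {1..card A}"
    by (rule card_subset_eq[OF _ sub]) (simp_all add: card_image[OF inj])
  then show ?thesis unfolding bij_betw_def rk_def[abs_def] using inj unfolding rk_def by simp
qed

lemma rank_count:
  fixes A :: "nat set"
  assumes fA: "finite A"
  shows "card {t\<in>A. card {s\<in>A. s \<le> t} \<le> c} = min c (card A)"
proof -
  let ?rk = "\<lambda>t. card {s\<in>A. s \<le> t}"
  have bij: "bij_betw ?rk A {1..card A}" by (rule rank_bij_betw[OF fA])
  have "bij_betw ?rk {t\<in>A. ?rk t \<le> c} {x\<in>{1..card A}. x \<le> c}"
    using bij unfolding bij_betw_def inj_on_def by auto
  moreover have "{x\<in>{1..card A}. x \<le> c} = {1..min c (card A)}" by auto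
  ultimately show ?thesis using bij_betw_same_card by fastforce
qed

lemma card_early_positions:
  assumes al: "is_alloc k m n y" and c: "c \<le> m"
  shows "card {t\<in>{1..n}. pos y t \<le> c} = k * c"
proof -
  have A1: "\<forall>t \<in> {1..n}. y t \<in> {1..k}" and A2: "\<forall>r \<in> {1..k}. card {t \<in> {1..n}. y t = r} = m"
    using al unfolding is_alloc_def by auto
  define B where "B r = {t\<in>{t\<in>{1..n}. y t = r}. card {s\<in>{t\<in>{1..n}. y t = r}. s \<le> t} \<le> c}" for r
  have posr: "pos y t = card {s\<in>{t'\<in>{1..n}. y t' = y t}. s \<le> t}" if "t \<in> {1..n}" for t
  proof -
    have "{s\<in>{1..t}. y s = y t} = {s\<in>{t'\<in>{1..n}. y t' = y t}. s \<le> t}" using that by auto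
    then show ?thesis unfolding pos_def by simp
  qed
  have e: "{t\<in>{1..n}. pos y t \<le> c} = (\<Union>r\<in>{1..k}. B r)"
  proof
    show "{t\<in>{1..n}. pos y t \<le> c} \<subseteq> (\<Union>r\<in>{1..k}. B r)"
    proof
      fix t assume t: "t \<in> {t\<in>{1..n}. pos y t \<le> c}"
      then have "y t \<in> {1..k}" using A1 by auto
      moreover have "t \<in> B (y t)" unfolding B_def using t posr[of t] by auto
      ultimately show "t \<in> (\<Union>r\<in>{1..k}. B r)" by blast
    qed
  next
    show "(\<Union>r\<in>{1..k}. B r) \<subseteq> {t\<in>{1..n}. pos y t \<le> c}"
    proof
      fix t assume "t \<in> (\<Union>r\<in>{1..k}. B r)"
      then obtain r where r: "r \<in> {1..k}" "t \<in> B r" by blast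
      then have t: "t \<in> {1..n}" "y t = r" unfolding B_def by auto
      then show "t \<in> {t\<in>{1..n}. pos y t \<le> c}" using r(2) posr[OF t(1)] unfolding B_def by auto
    qed
  qed
  have cB: "card (B r) = c" if "r \<in> {1..k}" for r
  proof -
    have "card (B r) = min c (card {t\<in>{1..n}. y t = r})" unfolding B_def by (rule rank_count) simp
    then show ?thesis using A2 that c by simp
  qed
  have "card (\<Union>r\<in>{1..k}. B r) = (\<Sum>r\<in>{1..k}. card (B r))"
  proof (rule card_UN_disjoint)
    show "finite {1..k}" by simp
    show "\<forall>r\<in>{1..k}. finite (B r)" unfolding B_def by simp
    show "\<forall>i\<in>{1..k}. \<forall>j\<in>{1..k}. i \<noteq> j \<longrightarrow> B i \<inter> B j = {}" unfolding B_def by blast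
  qed
  also have "\<dots> = (\<Sum>r\<in>{1..k}. c)" by (rule sum.cong) (use cB in auto)
  finally show ?thesis unfolding e by simp
qed

lemma pos_bounds:
  assumes al: "is_alloc k m n y" and t: "t \<in> {1..n}"
  shows "1 \<le> pos y t" "pos y t \<le> m"
proof -
  have A1: "\<forall>t \<in> {1..n}. y t \<in> {1..k}" and A2: "\<forall>r \<in> {1..k}. card {t \<in> {1..n}. y t = r} = m"
    using al unfolding is_alloc_def by auto
  have "t \<in> {s\<in>{1..t}. y s = y t}" using t by simp
  then have "{s\<in>{1..t}. y s = y t} \<noteq> {}" by blast
  then show "1 \<le> pos y t" unfolding pos_def by (simp add: card_gt_0_iff Suc_le_eq)
  have yt: "y t \<in> {1..k}" using A1 t by blast
  have "pos y t \<le> card {s\<in>{1..n}. y s = y t}" unfolding pos_def by (rule card_mono) (use t in auto)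
  then show "pos y t \<le> m" using A2 yt by simp
qed

lemma telescope_cost:
  fixes f :: "nat \<Rightarrow> nat"
  assumes "1 \<le> p" "p \<le> m"
  shows "real (f p) = real (f m) + (\<Sum>c\<in>{1..<m}. if p \<le> c then real (f c) - real (f (Suc c)) else 0)"
proof -
  have "(\<Sum>c\<in>{1..<m}. if p \<le> c then real (f c) - real (f (Suc c)) else 0) = (\<Sum>c\<in>{c\<in>{1..<m}. p \<le> c}. real (f c) - real (f (Suc c)))"
    by (rule sum.inter_filter[symmetric]) simp
  also have "{c\<in>{1..<m}. p \<le> c} = {p..<m}" using assms by auto
  also have "(\<Sum>c\<in>{p..<m}. real (f c) - real (f (Suc c))) = - (\<Sum>c\<in>{p..<m}. real (f (Suc c)) - real (f c))"
    by (simp add: sum_negf[symmetric])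
  also have "(\<Sum>c\<in>{p..<m}. real (f (Suc c)) - real (f c)) = real (f m) - real (f p)"
    using sum_Suc_diff'[OF assms(2), of "\<lambda>c. real (f c)"] by simp
  finally show ?thesis by simp
qed

lemma sum_if_const: "finite A \<Longrightarrow> (\<Sum>t\<in>A. if P t then (K::real) else 0) = K * real (card {t\<in>A. P t})"
proof -
  assume f: "finite A"
  have "(\<Sum>t\<in>A. if P t then K else 0) = (\<Sum>t\<in>{t\<in>A. P t}. K)" by (rule sum.inter_filter[OF f, symmetric])
  then show ?thesis by simp
qed

text \<open>Cost of an allocation as a nonnegative combination (for nonincreasing \<open>f\<close>) of the
  costs of the tasks in positions \<open>\<le> c\<close>.\<close>
lemma cost_decomp:
  assumes al: "is_alloc k m n y"
  shows "total_cost f T n y = real (f m) * (\<Sum>t=1..n. T t) +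
    (\<Sum>c\<in>{1..<m}. (real (f c) - real (f (Suc c))) * (\<Sum>t=1..n. if pos y t \<le> c then T t else 0))"
proof -
  define F where "F c = real (f c) - real (f (Suc c))" for c
  have "total_cost f T n y = (\<Sum>t=1..n. real (f m) * T t + (\<Sum>c\<in>{1..<m}. if pos y t \<le> c then F c * T t else 0))"
    unfolding total_cost_def
  proof (rule sum.cong)
    fix t assume t: "t \<in> {1..n}"
    have "real (f (pos y t)) * T t = (real (f m) + (\<Sum>c\<in>{1..<m}. if pos y t \<le> c then F c else 0)) * T t"
      using telescope_cost[OF pos_bounds[OF al t], of f] unfolding F_def by simp
    also have "\<dots> = real (f m) * T t + (\<Sum>c\<in>{1..<m}. if pos y t \<le> c then F c * T t else 0)"
      by (auto simp: distrib_right sum_distrib_right intro!: sum.cong)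
    finally show "real (f (pos y t)) * T t = \<dots>" .
  qed simp
  also have "\<dots> = real (f m) * (\<Sum>t=1..n. T t) + (\<Sum>t=1..n. \<Sum>c\<in>{1..<m}. if pos y t \<le> c then F c * T t else 0)"
    by (simp add: sum.distrib sum_distrib_left)
  also have "(\<Sum>t=1..n. \<Sum>c\<in>{1..<m}. if pos y t \<le> c then F c * T t else 0)
      = (\<Sum>c\<in>{1..<m}. \<Sum>t=1..n. if pos y t \<le> c then F c * T t else 0)"
    by (rule sum.swap)
  also have "(\<Sum>c\<in>{1..<m}. \<Sum>t=1..n. if pos y t \<le> c then F c * T t else 0)
      = (\<Sum>c\<in>{1..<m}. F c * (\<Sum>t=1..n. if pos y t \<le> c then T t else 0))"
    by (auto simp: sum_distrib_left intro!: sum.cong)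
  finally show ?thesis unfolding F_def .
qed

lemma early_cost_HL:
  assumes vals: "\<forall>t\<in>{1..n}. T t = H \<or> T t = L"
  shows "(\<Sum>t=1..n. if pos y t \<le> c then T t else 0)
    = H * real (card {t\<in>{1..n}. pos y t \<le> c}) + (L - H) * real (card {t\<in>{1..n}. T t = L \<and> pos y t \<le> c})"
proof -
  have "(\<Sum>t=1..n. if pos y t \<le> c then T t else 0)
      = (\<Sum>t=1..n. (if pos y t \<le> c then H else 0) + (if T t = L \<and> pos y t \<le> c then L - H else 0))"
    by (rule sum.cong) (use vals in auto)
  then show ?thesis by (simp add: sum.distrib sum_if_const)
qed

lemma total_cost_le_if_fewer_early_L:
  assumes x: "is_alloc k m n x" and y: "is_alloc k m n y"
    and vals: "\<forall>t\<in>{1..n}. T t = H \<or> T t = L" and f: "antimono f" and HL: "H < L"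
    and fewer: "\<And>c. c < m \<Longrightarrow> card {t\<in>{1..n}. T t = L \<and> pos x t \<le> c} \<le> card {t\<in>{1..n}. T t = L \<and> pos y t \<le> c}"
  shows "total_cost f T n x \<le> total_cost f T n y"
proof -
  have "(real (f c) - real (f (Suc c))) * (\<Sum>t=1..n. if pos x t \<le> c then T t else 0)
      \<le> (real (f c) - real (f (Suc c))) * (\<Sum>t=1..n. if pos y t \<le> c then T t else 0)"
    if c: "c \<in> {1..<m}" for c
  proof (rule mult_left_mono)
    show "0 \<le> real (f c) - real (f (Suc c))" using f unfolding antimono_def by (simp add: le_SucI)
    have "(L - H) * real (card {t\<in>{1..n}. T t = L \<and> pos x t \<le> c})
        \<le> (L - H) * real (card {t\<in>{1..n}. T t = L \<and> pos y t \<le> c})"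
      using fewer[of c] c HL by (intro mult_left_mono) auto
    show "(\<Sum>t=1..n. if pos x t \<le> c then T t else 0) \<le> (\<Sum>t=1..n. if pos y t \<le> c then T t else 0)"
    proof -
      have cm: "c \<le> m" using c by simp
      show ?thesis unfolding early_cost_HL[OF vals] card_early_positions[OF x cm] card_early_positions[OF y cm]
        using \<open>(L - H) * _ \<le> _\<close> by simp
    qed
  qed
  then show ?thesis unfolding cost_decomp[OF x] cost_decomp[OF y] by (intro add_left_mono sum_mono)
qed

theorem theorem2:
  fixes k m n :: nat and f :: "nat \<Rightarrow> nat" and T :: "nat \<Rightarrow> real" and H L :: real
  assumes "k > 0" and "m > 0" and "n = k * m"
    and "antimono f"
    and "0 \<le> H" and "H < L"
    and "\<forall>t \<in> {1..n}. T t \<in> {H, L}"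
  shows "is_alloc k m n (alg1 k (\<lambda>_. m) T) \<and>
         (\<forall>y. is_alloc k m n y \<longrightarrow>
              total_cost f T n (alg1 k (\<lambda>_. m) T) \<le> total_cost f T n y)"
proof -
  have vals: "\<forall>t\<in>{1..n}. T t = H \<or> T t = L" using assms(7) by blast
  have alg: "is_alloc k m n (alg1 k (\<lambda>_. m) T)" by (rule alg1_is_alloc[OF assms(3)])
  have "total_cost f T n (alg1 k (\<lambda>_. m) T) \<le> total_cost f T n y" if y: "is_alloc k m n y" for y
    by (rule total_cost_le_if_fewer_early_L[OF alg y vals assms(4,6)])
      (rule alg_minimizes_early_L[OF assms(3) vals assms(6) y], simp)
  with alg show ?thesis by blast
qed

end
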